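(* The invariants $Q_b\in\mathbb{Z}_6$, $Q_g\in\mathbb{Z}_6$ and $Q_c\in\mathbb{Z}_4$ of a $T^*$-colored link diagram are conserved under topologically allowed local reconnections.
   Context: $T^*=\{\pm1,\pm i,\pm j,\pm k,\tfrac{\pm1\pm i\pm j\pm k}{2}\}$ is the binary tetrahedral group (unit quaternions, all sign combinations), $Q_8=\{\pm1,\pm i,\pm j,\pm k\}$. A $T^*$-colored link diagram is an oriented diagram of a tame link $\mathcal L\subset\mathbb{R}^3$ together with a homomorphism $\phi:\pi_1(\mathbb{R}^3\setminus\mathcal L)\to T^*$, each arc carrying the label $\phi(m_a)$ of its Wirtinger meridian (basepoint above the projection plane, sense given by the orientation of the arc; reversing orientation inverts labels). At a crossing $c$ where a component passes under an over-arc labeled $g$, incoming under-label $x$ and outgoing under-label $x'$ satisfy $x'=g^{\varepsilon_c}xg^{-\varepsilon_c}$, $\varepsilon_c\in\{\pm1\}$ determined by the sign of the crossing. A topologically allowed reconnection is an oriented band move (saddle) across a complementary region of the diagram between two arc segments on the boundary of that region which run in opposite directions across the region and carry the same label $x$; the two segments are cut and reconnected inside the region compatibly with the orientations, and the new arcs carry label $x$. A component is black if its labels lie in $\{\tfrac{1\pm i\pm j\pm k}{2}\}$, gray if in $\{\tfrac{-1\pm i\pm j\pm k}{2}\}$, a $Q_8$-loop if in $\{\pm i,\pm j,\pm k\}$, purple if its label is $-1$. Black components are oriented so their labels lie in the conjugacy class of $\tfrac{1-i-j-k}{2}$ (those $\tfrac{1\pm i\pm j\pm k}{2}$ with an odd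 number of minus signs); gray components so their labels lie in the conjugacy class of $\tfrac{-1+i+j+k}{2}$ (those $\tfrac{-1\pm i\pm j\pm k}{2}$ with an even number of minus signs); $Q_8$-loops carry arbitrary orientations. For a black or $Q_8$ component $L$ with basepoint $b$ on an arc with label $\chi(b)$ of order $n$: traverse $L$ from $b$, let $c_1,\dots,c_m$ be the successive crossings where $L$ passes under an arc whose label is not $-1$, with over-arc labels $g_r$, set $q(L,b)=g_m^{\varepsilon_{c_m}}\cdots g_1^{\varepsilon_{c_1}}$; then $q(L,b)=\chi(b)^{Q'(L)}$ with $Q'(L)\in\mathbb{Z}_n$ independent of $b$. Crossing signs use the right-hand rule. Define $Q_b=\sum_{L\text{ black}}Q'(L)-\omega_b-4l_{bg}\in\mathbb{Z}_6$, where $\omega_b$ is the signed count of crossings in which both strands are black and $l_{bg}$ the signed count of crossings where a black strand passes under a gray strand; $Q_g=Q_b(\rho(\mathcal D))$, where $\rho(\mathcal D)$ is the $T^*$-colored diagram obtained by replacing every label $a\notin Q_8$ by $-a$ (labels in $Q_8$ unchanged, orientations unchanged); $Q_c=\sum_{L\ Q_8\text{-loop}}Q'(L)-\omega_c\in\mathbb{Z}_4$, where $\omega_c$ is the signed count of crossings in which both strands belong to $Q_8$-loops (for any choice of orientations and basepoints of the $Q_8$-loops). *)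

theory Defs
  imports Complex_Main
begin

section \<open>Quaternions and the binary tetrahedral group\<close>

datatype quat = Quat (qre: real) (qi: real) (qj: real) (qk: real)

definition qone :: quat where "qone = Quat 1 0 0 0"

definition qneg :: "quat \<Rightarrow> quat" where
  "qneg q = Quat (- qre q) (- qi q) (- qj q) (- qk q)"

definition qmul :: "quat \<Rightarrow> quat \<Rightarrow> quat" where
  "qmul p q = Quat
     (qre p * qre q - qi p * qi q - qj p * qj q - qk p * qk q)
     (qre p * qi q + qi p * qre q + qj p * qk q - qk p * qj q)
     (qre p * qj q - qi p * qk q + qj p * qre q + qk p * qi q)
     (qre p * qk q + qi p * qj q - qj p * qi q + qk p * qre q)"

definition qinv :: "quat \<Rightarrow> quat" where
  "qinv q = (let n = (qre q)\<^sup>2 + (qi q)\<^sup>2 + (qj q)\<^sup>2 + (qk q)\<^sup>2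
             in Quat (qre q / n) (- qi q / n) (- qj q / n) (- qk q / n))"

primrec qpow :: "quat \<Rightarrow> nat \<Rightarrow> quat" where
  "qpow q 0 = qone"
| "qpow q (Suc n) = qmul q (qpow q n)"

definition qzpow :: "quat \<Rightarrow> int \<Rightarrow> quat" where
  "qzpow q k = (if 0 \<le> k then qpow q (nat k) else qpow (qinv q) (nat (- k)))"

definition Q8 :: "quat set" where
  "Q8 = {Quat s 0 0 0 | s. s \<in> {1, -1}} \<union> {Quat 0 s 0 0 | s. s \<in> {1, -1}}
      \<union> {Quat 0 0 s 0 | s. s \<in> {1, -1}} \<union> {Quat 0 0 0 s | s. s \<in> {1, -1}}"

definition Tstar :: "quat set" where
  "Tstar = Q8 \<union> {Quat a b c d | a b c d.
      a \<in> {1/2, -1/2} \<and> b \<in> {1/2, -1/2} \<and> c \<in> {1/2, -1/2} \<and> d \<in> {1/2, -1/2}}"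

text \<open>The "good" classes: black with an odd number of minus
  signs (conjugacy class of (1-i-j-k)/2), gray with an even number of minus signs
  (conjugacy class of (-1+i+j+k)/2).\<close>
definition is_black :: "quat \<Rightarrow> bool" where
  "is_black q \<longleftrightarrow> q \<in> Tstar \<and> qre q = 1/2"
definition black_good :: "quat \<Rightarrow> bool" where
  "black_good q \<longleftrightarrow> is_black q \<and> qi q * qj q * qk q < 0"
definition is_gray :: "quat \<Rightarrow> bool" where
  "is_gray q \<longleftrightarrow> q \<in> Tstar \<and> qre q = -1/2"
definition gray_good :: "quat \<Rightarrow> bool" where
  "gray_good q \<longleftrightarrow> is_gray q \<and> qi q * qj q * qk q > 0"
definition is_Q8loop :: "quat \<Rightarrow> bool" where
  "is_Q8loop q \<longleftrightarrow> q \<in> Tstar \<and> qre q = 0"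

section \<open>Combinatorial oriented link diagrams on the sphere\<close>

text \<open>
  A crossing c has four slots (c,0),(c,1),(c,2),(c,3) in counterclockwise order;
  the under-strand runs through slots 0 and 2, the over-strand through slots 1 and 3.
  Every edge in Es (a piece of the diagram between two crossing slots) has a tail slot
  and a head slot, and is oriented from tail to head.  Fs are the crossingless
  components (free loops).  A dart (e,True) is the
  left side of e, (e,False) its right side; ereg assigns to each side the
  complementary region of the diagram it faces.\<close>

record diagram =
  Xs :: "nat set"
  Es :: "nat set"
  Fs :: "nat set"
  etail :: "nat \<Rightarrow> nat \<times> nat"
  ehead :: "nat \<Rightarrow> nat \<times> nat"
  elab :: "nat \<Rightarrow> quat"
  ereg :: "nat \<times> bool \<Rightarrow> nat"

definition slots :: "diagram \<Rightarrow> (nat \<times> nat) set" where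
  "slots D = Xs D \<times> {0..<4}"

definition edge_end :: "diagram \<Rightarrow> nat \<times> bool \<Rightarrow> nat \<times> nat" where
  "edge_end D eb = (if snd eb then ehead D (fst eb) else etail D (fst eb))"

definition wf_pd :: "diagram \<Rightarrow> bool" where
  "wf_pd D \<longleftrightarrow> finite (Xs D) \<and> finite (Es D) \<and> finite (Fs D) \<and> Es D \<inter> Fs D = {}
     \<and> bij_betw (edge_end D) (Es D \<times> UNIV) (slots D)
     \<and> (\<forall>c\<in>Xs D. ((c,0) \<in> ehead D ` Es D \<longleftrightarrow> (c,2) \<in> etail D ` Es D)
                 \<and> ((c,1) \<in> ehead D ` Es D \<longleftrightarrow> (c,3) \<in> etail D ` Es D))"

definition edge_at :: "diagram \<Rightarrow> nat \<times> nat \<Rightarrow> nat" where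
  "edge_at D s = (THE e. e \<in> Es D \<and> (ehead D e = s \<or> etail D e = s))"

text \<open>incoming slot of the under-strand and of the over-strand at crossing c\<close>
definition uin :: "diagram \<Rightarrow> nat \<Rightarrow> nat" where
  "uin D c = (if (c,0) \<in> ehead D ` Es D then 0 else 2)"
definition oin :: "diagram \<Rightarrow> nat \<Rightarrow> nat" where
  "oin D c = (if (c,1) \<in> ehead D ` Es D then 1 else 3)"

text \<open>crossing sign (right-hand rule): positive iff, going counterclockwise from the
  incoming under-slot, the next slot is the outgoing over-slot\<close>
definition csign :: "diagram \<Rightarrow> nat \<Rightarrow> int" where
  "csign D c = (if oin D c = (uin D c + 3) mod 4 then 1 else -1)"

definition overlab :: "diagram \<Rightarrow> nat \<Rightarrow> quat" where
  "overlab D c = elab D (edge_at D (c, 1))"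
definition in_under :: "diagram \<Rightarrow> nat \<Rightarrow> nat" where
  "in_under D c = edge_at D (c, uin D c)"
definition out_under :: "diagram \<Rightarrow> nat \<Rightarrow> nat" where
  "out_under D c = edge_at D (c, (uin D c + 2) mod 4)"

text \<open>T*-coloring = Wirtinger relations (with epsilon_c = sign of c)\<close>
definition colored :: "diagram \<Rightarrow> bool" where
  "colored D \<longleftrightarrow> (\<forall>e \<in> Es D \<union> Fs D. elab D e \<in> Tstar)
     \<and> (\<forall>c\<in>Xs D. elab D (edge_at D (c,1)) = elab D (edge_at D (c,3))
         \<and> elab D (out_under D c) =
             qmul (qmul (qzpow (overlab D c) (csign D c)) (elab D (in_under D c)))
                  (qzpow (overlab D c) (- csign D c)))"

definition darts :: "diagram \<Rightarrow> (nat \<times> bool) set" where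
  "darts D = (Es D \<union> Fs D) \<times> UNIV"

text \<open>next dart along the boundary of a face, keeping the face on the left\<close>
definition dnext :: "diagram \<Rightarrow> nat \<times> bool \<Rightarrow> nat \<times> bool" where
  "dnext D d = (if fst d \<in> Fs D then d else
     (let cp = edge_end D d; s = (fst cp, (snd cp + 3) mod 4); e' = edge_at D s
      in (e', etail D e' = s)))"

definition equiv_closure :: "('a \<times> 'a) set \<Rightarrow> ('a \<times> 'a) set" where
  "equiv_closure R = (R \<union> R\<inverse>)\<^sup>*"

definition face_rel :: "diagram \<Rightarrow> ((nat \<times> bool) \<times> (nat \<times> bool)) set" where
  "face_rel D = equiv_closure {(d, dnext D d) | d. d \<in> darts D}"

definition piece_rel :: "diagram \<Rightarrow> ((nat \<times> bool) \<times> (nat \<times> bool)) set" where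
  "piece_rel D = equiv_closure ({(d, dnext D d) | d. d \<in> darts D}
                     \<union> {((e,b), (e, \<not> b)) | e b. (e,b) \<in> darts D})"

definition faces :: "diagram \<Rightarrow> (nat \<times> bool) set set" where
  "faces D = darts D // face_rel D"
definition pieces :: "diagram \<Rightarrow> (nat \<times> bool) set set" where
  "pieces D = darts D // piece_rel D"
definition regions :: "diagram \<Rightarrow> nat set" where
  "regions D = ereg D ` darts D"

text \<open>Planarity on the sphere: every connected piece is a genus-0 map (Euler), the
  region of a side is constant along face boundaries, and the incidence multigraph
  pieces--regions (one edge per face) is a tree.\<close>
definition planar :: "diagram \<Rightarrow> bool" where
  "planar D \<longleftrightarrow> (\<forall>d\<in>darts D. ereg D (dnext D d) = ereg D d)
     \<and> card (faces D) = card (Xs D) + 2 * card (pieces D)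
     \<and> (darts D \<noteq> {} \<longrightarrow> card (regions D) + card (pieces D) = card (faces D) + 1)
     \<and> darts D \<times> darts D \<subseteq> equiv_closure (piece_rel D \<union>
          {(d, d') | d d'. d \<in> darts D \<and> d' \<in> darts D \<and> ereg D d = ereg D d'})"

definition Tstar_diagram :: "diagram \<Rightarrow> bool" where
  "Tstar_diagram D \<longleftrightarrow> wf_pd D \<and> planar D \<and> colored D"

section \<open>Components and the invariants\<close>

definition esucc :: "diagram \<Rightarrow> nat \<Rightarrow> nat" where
  "esucc D e = (if e \<in> Es D then edge_at D (fst (ehead D e), (snd (ehead D e) + 2) mod 4)
                else e)"

definition components :: "diagram \<Rightarrow> nat set set" where
  "components D = {{(esucc D ^^ n) e | n. True} | e. e \<in> Es D \<union> Fs D}"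

definition period :: "diagram \<Rightarrow> nat \<Rightarrow> nat" where
  "period D e = (LEAST n. 0 < n \<and> (esucc D ^^ n) e = e)"

text \<open>contribution of an edge: if the edge ends by passing under an over-arc with label
  g \<noteq> -1 at crossing c, it contributes g^(eps_c)\<close>
definition ufactor :: "diagram \<Rightarrow> nat \<Rightarrow> quat" where
  "ufactor D e = (let c = fst (ehead D e) in
     if e \<in> Es D \<and> snd (ehead D e) \<in> {0, 2} \<and> overlab D c \<noteq> qneg qone
     then qzpow (overlab D c) (csign D c) else qone)"

primrec qprod :: "diagram \<Rightarrow> nat \<Rightarrow> nat \<Rightarrow> quat" where
  "qprod D b 0 = qone"
| "qprod D b (Suc t) = qmul (ufactor D ((esucc D ^^ t) b)) (qprod D b t)"

definition qLb :: "diagram \<Rightarrow> nat \<Rightarrow> quat" where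
  "qLb D b = qprod D b (period D b)"

text \<open>Q'(L): q(L,b) = chi(b)^Q'(L) for every basepoint b on L (an integer
  representative of the class in Z_n)\<close>
definition Qprime :: "diagram \<Rightarrow> nat set \<Rightarrow> int" where
  "Qprime D L = (SOME k. \<forall>b\<in>L. qLb D b = qzpow (elab D b) k)"

definition black_comp :: "diagram \<Rightarrow> nat set \<Rightarrow> bool" where
  "black_comp D L \<longleftrightarrow> (\<forall>e\<in>L. is_black (elab D e))"
definition Q8_comp :: "diagram \<Rightarrow> nat set \<Rightarrow> bool" where
  "Q8_comp D L \<longleftrightarrow> (\<forall>e\<in>L. is_Q8loop (elab D e))"

definition reverse_edges :: "nat set \<Rightarrow> diagram \<Rightarrow> diagram" where
  "reverse_edges S D = D\<lparr>
     etail := (\<lambda>e. if e \<in> S then ehead D e else etail D e),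
     ehead := (\<lambda>e. if e \<in> S then etail D e else ehead D e),
     elab := (\<lambda>e. if e \<in> S then qinv (elab D e) else elab D e),
     ereg := (\<lambda>(e,b). if e \<in> S then ereg D (e, \<not> b) else ereg D (e, b))\<rparr>"

definition orient_bg :: "diagram \<Rightarrow> diagram" where
  "orient_bg D = reverse_edges {e \<in> Es D \<union> Fs D.
       (is_black (elab D e) \<and> \<not> black_good (elab D e))
     \<or> (is_gray (elab D e) \<and> \<not> gray_good (elab D e))} D"

definition omega_b :: "diagram \<Rightarrow> int" where
  "omega_b D = (\<Sum>c\<in>Xs D. if is_black (overlab D c) \<and> is_black (elab D (in_under D c))
                            then csign D c else 0)"

definition l_bg :: "diagram \<Rightarrow> int" where
  "l_bg D = (\<Sum>c\<in>Xs D. if is_gray (overlab D c) \<and> is_black (elab D (in_under D c))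
                         then csign D c else 0)"

definition omega_c :: "diagram \<Rightarrow> int" where
  "omega_c D = (\<Sum>c\<in>Xs D. if is_Q8loop (overlab D c) \<and> is_Q8loop (elab D (in_under D c))
                            then csign D c else 0)"

definition Qb_oriented :: "diagram \<Rightarrow> int" where
  "Qb_oriented D = ((\<Sum>L\<in>{L\<in>components D. black_comp D L}. Qprime D L)
                    - omega_b D - 4 * l_bg D) mod 6"

definition Qb :: "diagram \<Rightarrow> int" where
  "Qb D = Qb_oriented (orient_bg D)"

definition rho :: "diagram \<Rightarrow> diagram" where
  "rho D = D\<lparr>elab := (\<lambda>e. if elab D e \<in> Q8 then elab D e else qneg (elab D e))\<rparr>"

definition Qg :: "diagram \<Rightarrow> int" where
  "Qg D = Qb (rho D)"

definition Qc :: "diagram \<Rightarrow> int" where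
  "Qc D = ((\<Sum>L\<in>{L\<in>components D. Q8_comp D L}. Qprime D L) - omega_c D) mod 4"

section \<open>Topologically allowed reconnections (oriented band moves)\<close>

definition fresh :: "diagram \<Rightarrow> nat" where
  "fresh D = Suc (Max (insert 0 (Es D \<union> Fs D)))"

definition add_free_loop :: "quat \<Rightarrow> diagram \<Rightarrow> diagram" where
  "add_free_loop x D = D\<lparr>Fs := insert (fresh D) (Fs D), elab := (elab D)(fresh D := x)\<rparr>"

text \<open>The band attaches to a segment of e1 and a segment of e2 (edges or free loops).
  The segments are cut and reconnected compatibly with the orientations: the part
  arriving along e1 continues along e2 and vice versa.  (Region data of the result are
  not recomputed; the invariants do not depend on them.)\<close>
definition band_move :: "diagram \<Rightarrow> nat \<Rightarrow> nat \<Rightarrow> diagram" where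
  "band_move D e1 e2 =
    (if e1 = e2 then add_free_loop (elab D e1) D
     else if e1 \<in> Es D \<and> e2 \<in> Es D then
       D\<lparr>ehead := (ehead D)(e1 := ehead D e2, e2 := ehead D e1)\<rparr>
     else if e1 \<in> Fs D then D\<lparr>Fs := Fs D - {e1}\<rparr>
     else D\<lparr>Fs := Fs D - {e2}\<rparr>)"

text \<open>allowed: the two segments lie on the boundary of the same complementary region,
  on the same side (left or right) of their strands -- i.e. they run in opposite
  directions across the region -- and carry the same label\<close>
definition allowed_reconnection :: "diagram \<Rightarrow> nat \<Rightarrow> nat \<Rightarrow> bool \<Rightarrow> bool" where
  "allowed_reconnection D e1 e2 s \<longleftrightarrow> e1 \<in> Es D \<union> Fs D \<and> e2 \<in> Es D \<union> Fs D
     \<and> ereg D (e1, s) = ereg D (e2, s) \<and> elab D e1 = elab D e2"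

end

theory Submission
  imports Defs "HOL-Combinatorics.Orbits"
begin

text \<open>Walking along a component \<open>L\<close>, the label is conjugated at every undercrossing by the factor
  contributed there; hence the holonomy \<open>q(L,b)\<close> commutes with \<open>\<chi>(b)\<close>.  For black labels
  (order 6) and \<open>Q\<^sub>8\<close>-labels (order 4) the centralizer in \<open>T*\<close> is the cyclic group generated by
  \<open>\<chi>(b)\<close>, which makes \<open>Q'(L)\<close> well defined.

  A band move between two arcs with the same label \<open>x\<close> either merges two components into one or
  splits one; splitting is merging read backwards.  After merging, the holonomy of the new component
  is the product of the two old ones, which are powers of conjugates of the common label, so the
  exponents add and \<open>\<Sum> Q'(L)\<close> is unchanged.  The crossings, their signs and the labels meeting
  there are untouched, so the writhe-like corrections do not change either.  Orienting black and gray
  components into the prescribed classes turns a band between two reversed arcs into a reconnection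
  of their tails rather than their heads, and \<open>Q\<^sub>g\<close> reduces to \<open>Q\<^sub>b\<close> through \<open>\<rho>\<close>, which
  commutes with band moves and preserves colorings.\<close>

section \<open>Quaternions\<close>

lemma quat_eq_iff: "p = q \<longleftrightarrow> qre p = qre q \<and> qi p = qi q \<and> qj p = qj q \<and> qk p = qk q"
  by (cases p; cases q) auto

instantiation quat :: "{ring_1, inverse}"
begin
definition "0 = Quat 0 0 0 0"
definition "1 = qone"
definition "p + q = Quat (qre p + qre q) (qi p + qi q) (qj p + qj q) (qk p + qk q)"
definition "p - q = Quat (qre p - qre q) (qi p - qi q) (qj p - qj q) (qk p - qk q)"
definition "- q = qneg q"
definition "p * q = qmul p q"
definition "inverse q = qinv q"
definition "p div q = qmul p (qinv q)"
instance
  by standard (simp_all add: quat_eq_iff zero_quat_def one_quat_def plus_quat_def minus_quat_def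
     uminus_quat_def times_quat_def qone_def qneg_def qmul_def algebra_simps)
end

lemma quat_norm_nonzero: "q \<noteq> 0 \<Longrightarrow> (qre q)\<^sup>2 + (qi q)\<^sup>2 + (qj q)\<^sup>2 + (qk q)\<^sup>2 \<noteq> 0"
  by (auto simp: quat_eq_iff zero_quat_def add_nonneg_eq_0_iff)

instance quat :: division_ring
proof
  fix a :: quat assume a: "a \<noteq> 0"
  define n where "n = (qre a)\<^sup>2 + (qi a)\<^sup>2 + (qj a)\<^sup>2 + (qk a)\<^sup>2"
  have n: "n \<noteq> 0" using quat_norm_nonzero[OF a] by (simp add: n_def)
  have inv: "inverse a = Quat (qre a / n) (- qi a / n) (- qj a / n) (- qk a / n)"
    by (simp add: inverse_quat_def qinv_def n_def Let_def)
  show "inverse a * a = 1" "a * inverse a = 1"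
    using n by (simp_all add: inv quat_eq_iff times_quat_def one_quat_def qmul_def qone_def
        divide_simps, (simp add: n_def power2_eq_square algebra_simps)?)+
next
  show "inverse (0::quat) = 0" by (simp add: inverse_quat_def qinv_def zero_quat_def)
next
  fix a b :: quat show "a div b = a * inverse b"
    by (simp add: divide_quat_def times_quat_def inverse_quat_def)
qed

lemma qmul_eq_times: "qmul p q = p * q" by (simp add: times_quat_def)
lemma qone_eq_one: "qone = 1" by (simp add: one_quat_def)
lemma qinv_eq_inverse: "qinv q = inverse q" by (simp add: inverse_quat_def)
lemma qneg_eq_uminus: "qneg q = - q" by (simp add: uminus_quat_def)
lemma qpow_eq_power: "qpow q n = q ^ n" by (induction n) (simp_all add: qone_eq_one qmul_eq_times)
lemma qzpow_eq_power_int: "qzpow q k = q powi k"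
  by (simp add: qzpow_def power_int_def qpow_eq_power qinv_eq_inverse)

lemma quat_minus_one_neq_one: "(-1::quat) \<noteq> 1"
  by (simp add: quat_eq_iff uminus_quat_def qneg_def one_quat_def qone_def)

lemma qre_mult_commute: "qre (a * b) = qre (b * a)"
  by (simp add: times_quat_def qmul_def algebra_simps)

lemma qre_conjugate: assumes "g \<noteq> 0" shows "qre (g * x * inverse g) = qre x"
proof -
  have "qre (g * x * inverse g) = qre (g * (x * inverse g))" by (simp add: mult.assoc)
  also have "\<dots> = qre ((x * inverse g) * g)" by (rule qre_mult_commute)
  also have "\<dots> = qre x" using assms by (simp add: mult.assoc)
  finally show ?thesis .
qed

section \<open>The binary tetrahedral group\<close>

text \<open>An element of \<open>T*\<close> is encoded by the integer quadruple of its doubled coordinates, so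
  that facts about all (pairs of) elements of \<open>T*\<close> become finite computations on integers.\<close>

type_synonym code = "int \<times> int \<times> int \<times> int"

definition quat_of_code :: "code \<Rightarrow> quat" where
  "quat_of_code x = (case x of (a,b,c,d) \<Rightarrow> Quat (of_int a/2) (of_int b/2) (of_int c/2) (of_int d/2))"

definition Tstar_codes :: "code list" where
 "Tstar_codes = [(2,0,0,0), (-2,0,0,0), (0,2,0,0), (0,-2,0,0), (0,0,2,0), (0,0,-2,0), (0,0,0,2), (0,0,0,-2),
   (1,1,1,1),(1,1,1,-1),(1,1,-1,1),(1,1,-1,-1),(1,-1,1,1),(1,-1,1,-1),(1,-1,-1,1),(1,-1,-1,-1),
   (-1,1,1,1),(-1,1,1,-1),(-1,1,-1,1),(-1,1,-1,-1),(-1,-1,1,1),(-1,-1,1,-1),(-1,-1,-1,1),(-1,-1,-1,-1)]"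

fun code_mult_double :: "code \<Rightarrow> code \<Rightarrow> code" where
 "code_mult_double (a,b,c,d) (e,f,g,h) = ((a*e - b*f - c*g - d*h), (a*f + b*e + c*h - d*g),
     (a*g - b*h + c*e + d*f), (a*h + b*g - c*f + d*e))"

fun code_mult :: "code \<Rightarrow> code \<Rightarrow> code" where
 "code_mult (a,b,c,d) (e,f,g,h) = ((a*e - b*f - c*g - d*h) div 2, (a*f + b*e + c*h - d*g) div 2,
     (a*g - b*h + c*e + d*f) div 2, (a*h + b*g - c*f + d*e) div 2)"

fun code_double :: "code \<Rightarrow> code" where "code_double (a,b,c,d) = (2*a,2*b,2*c,2*d)"
fun code_neg :: "code \<Rightarrow> code" where "code_neg (a,b,c,d) = (-a,-b,-c,-d)"
fun code_cnj :: "code \<Rightarrow> code" where "code_cnj (a,b,c,d) = (a,-b,-c,-d)"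
fun code_norm :: "code \<Rightarrow> int" where "code_norm (a,b,c,d) = a*a+b*b+c*c+d*d"
fun code_power :: "code \<Rightarrow> nat \<Rightarrow> code" where
  "code_power x 0 = (2,0,0,0)" | "code_power x (Suc n) = code_mult x (code_power x n)"
fun code_black_good :: "code \<Rightarrow> bool" where "code_black_good (a,b,c,d) = (b*c*d < 0)"
fun code_gray_good :: "code \<Rightarrow> bool" where "code_gray_good (a,b,c,d) = (b*c*d > 0)"

lemma code_mult_closed:
  "list_all (\<lambda>x. list_all (\<lambda>y. code_mult_double x y = code_double (code_mult x y)
      \<and> code_mult x y \<in> set Tstar_codes) Tstar_codes) Tstar_codes"
  by code_simp

lemma code_cnj_closed: "list_all (\<lambda>x. code_cnj x \<in> set Tstar_codes \<and> code_norm x = 4) Tstar_codes"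
  by code_simp

lemma code_centralizers:
  "list_all (\<lambda>x. fst x \<in> {0,1} \<longrightarrow> list_all (\<lambda>y. code_mult x y = code_mult y x \<longrightarrow>
     y \<in> {(2,0,0,0), (-2,0,0,0), x, code_neg x, code_cnj x, code_neg (code_cnj x)}) Tstar_codes) Tstar_codes"
  by code_simp

lemma code_orders:
  "list_all (\<lambda>x. (fst x = 1 \<longrightarrow> code_power x 3 = (-2,0,0,0)
        \<and> x \<notin> {(2,0,0,0),(-2,0,0,0)} \<and> code_power x 2 \<notin> {(2,0,0,0),(-2,0,0,0)})
     \<and> (fst x = 0 \<longrightarrow> code_power x 2 = (-2,0,0,0) \<and> x \<notin> {(2,0,0,0),(-2,0,0,0)}))
   Tstar_codes"
  by code_simp

lemma code_conj_good:
  "list_all (\<lambda>g. list_all (\<lambda>x. let y = code_mult (code_mult g x) (code_cnj g) in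
     (fst x = 1 \<longrightarrow> (code_black_good y \<longleftrightarrow> code_black_good x)) \<and>
     (fst x = -1 \<longrightarrow> (code_gray_good y \<longleftrightarrow> code_gray_good x))) Tstar_codes) Tstar_codes"
  by code_simp

lemma Tstar_eq_codes: "Tstar = quat_of_code ` set Tstar_codes"
proof -
  have T: "Tstar = {Quat 1 0 0 0, Quat (-1) 0 0 0, Quat 0 1 0 0, Quat 0 (-1) 0 0,
          Quat 0 0 1 0, Quat 0 0 (-1) 0, Quat 0 0 0 1, Quat 0 0 0 (-1)} \<union>
     {Quat a b c d | a b c d. a \<in> {1/2, -1/2} \<and> b \<in> {1/2, -1/2} \<and> c \<in> {1/2, -1/2} \<and> d \<in> {1/2, -1/2}}"
    unfolding Tstar_def Q8_def by blast
  have "\<exists>v\<in>set Tstar_codes. x = quat_of_code v" if "x \<in> Tstar" for x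
    using that unfolding T
    by (elim UnE insertE CollectE exE conjE; simp only: Tstar_codes_def; simp add: quat_of_code_def)
  moreover have "quat_of_code v \<in> Tstar" if "v \<in> set Tstar_codes" for v
  proof -
    have unit: "Quat s 0 0 0 \<in> Tstar \<and> Quat 0 s 0 0 \<in> Tstar \<and> Quat 0 0 s 0 \<in> Tstar \<and> Quat 0 0 0 s \<in> Tstar"
      if "s \<in> {1,-1}" for s
      unfolding Tstar_def Q8_def by (intro conjI; rule UnI1; use that in blast)
    have half: "Quat a b c d \<in> Tstar"
      if "a \<in> {1/2, -1/2}" "b \<in> {1/2, -1/2}" "c \<in> {1/2, -1/2}" "d \<in> {1/2, -1/2}" for a b c d
      unfolding T
      by (rule UnI2) (use that in blast)
    show ?thesis
      using that unfolding Tstar_codes_def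
      by (simp only: set_simps insert_iff; elim disjE; simp add: quat_of_code_def unit half)
  qed
  ultimately show ?thesis by blast
qed

lemma Tstar_obtain_code:
  assumes "q \<in> Tstar" obtains v where "v \<in> set Tstar_codes" "q = quat_of_code v"
  using assms unfolding Tstar_eq_codes by blast

lemma quat_of_code_inj: "quat_of_code x = quat_of_code y \<Longrightarrow> x = y"
  by (cases x; cases y) (simp add: quat_of_code_def)

lemma quat_of_code_mult_double:
  assumes "code_mult_double v w = code_double z" shows "quat_of_code v * quat_of_code w = quat_of_code z"
proof (cases v; cases w; cases z)
  fix a b c d e f g h z1 z2 z3 z4
  assume v: "v = (a,b,c,d)" and w: "w = (e,f,g,h)" and z: "z = (z1,z2,z3,z4)"
  have "real_of_int (a*e - b*f - c*g - d*h) = real_of_int (2*z1)"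
    and "real_of_int (a*f + b*e + c*h - d*g) = real_of_int (2*z2)"
    and "real_of_int (a*g - b*h + c*e + d*f) = real_of_int (2*z3)"
    and "real_of_int (a*h + b*g - c*f + d*e) = real_of_int (2*z4)"
    using assms by (simp_all add: v w z)
  then show ?thesis by (simp add: v w z quat_of_code_def times_quat_def qmul_def)
qed

lemma quat_of_code_mult:
  "v \<in> set Tstar_codes \<Longrightarrow> w \<in> set Tstar_codes
    \<Longrightarrow> quat_of_code v * quat_of_code w = quat_of_code (code_mult v w) \<and> code_mult v w \<in> set Tstar_codes"
  using code_mult_closed quat_of_code_mult_double by (simp add: list_all_iff)

lemma quat_of_code_one: "quat_of_code (2,0,0,0) = 1"
  by (simp add: quat_of_code_def one_quat_def qone_def)

lemma quat_of_code_minus_one: "quat_of_code (-2,0,0,0) = -1"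
  by (simp add: quat_of_code_def uminus_quat_def qneg_def one_quat_def qone_def)

lemma quat_of_code_neg: "quat_of_code (code_neg v) = - quat_of_code v"
  by (cases v) (simp add: quat_of_code_def uminus_quat_def qneg_def)

lemma qre_quat_of_code: "qre (quat_of_code v) = real_of_int (fst v) / 2"
  by (cases v) (simp add: quat_of_code_def)

lemma inverse_quat_of_code:
  assumes "v \<in> set Tstar_codes"
  shows "inverse (quat_of_code v) = quat_of_code (code_cnj v) \<and> code_cnj v \<in> set Tstar_codes"
proof -
  have n: "code_norm v = 4" and c: "code_cnj v \<in> set Tstar_codes"
    using code_cnj_closed assms by (auto simp: list_all_iff)
  obtain a b c d where v: "v = (a,b,c,d)" by (cases v)
  have "real_of_int (a*a+b*b+c*c+d*d) = 4" using n by (simp add: v)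
  then have "(real_of_int a/2)\<^sup>2 + (real_of_int b/2)\<^sup>2 + (real_of_int c/2)\<^sup>2 + (real_of_int d/2)\<^sup>2 = 1"
    by (simp add: power2_eq_square field_simps)
  then show ?thesis using c by (simp add: v quat_of_code_def inverse_quat_def qinv_def Let_def)
qed

lemma power_quat_of_code:
  "v \<in> set Tstar_codes \<Longrightarrow> quat_of_code (code_power v n) = quat_of_code v ^ n \<and> code_power v n \<in> set Tstar_codes"
proof (induction n)
  case 0 then show ?case by (simp add: quat_of_code_one Tstar_codes_def)
next
  case (Suc n) then show ?case using quat_of_code_mult[of v "code_power v n"] by simp
qed

lemma Tstar_one: "1 \<in> Tstar"
  by (simp add: Tstar_eq_codes Tstar_codes_def flip: quat_of_code_one)

lemma Tstar_mult: "a \<in> Tstar \<Longrightarrow> b \<in> Tstar \<Longrightarrow> a * b \<in> Tstar"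
  unfolding Tstar_eq_codes using quat_of_code_mult by blast

lemma Tstar_inverse: "a \<in> Tstar \<Longrightarrow> inverse a \<in> Tstar"
  unfolding Tstar_eq_codes using inverse_quat_of_code by blast

lemma Tstar_uminus: "a \<in> Tstar \<Longrightarrow> - a \<in> Tstar"
proof -
  assume "a \<in> Tstar"
  then obtain v where v: "v \<in> set Tstar_codes" "a = quat_of_code v" by (rule Tstar_obtain_code)
  have "code_neg v \<in> set Tstar_codes" using v(1) unfolding Tstar_codes_def by auto
  then show ?thesis using v unfolding Tstar_eq_codes by (auto simp flip: quat_of_code_neg)
qed

lemma Tstar_nonzero: "a \<in> Tstar \<Longrightarrow> a \<noteq> 0"
proof
  assume "a \<in> Tstar" "a = 0"
  then obtain v where v: "v \<in> set Tstar_codes" "quat_of_code (0,0,0,0) = quat_of_code v"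
    by (auto simp: zero_quat_def quat_of_code_def elim: Tstar_obtain_code)
  then have "v = (0,0,0,0)" using quat_of_code_inj by metis
  with v show False unfolding Tstar_codes_def by simp
qed

lemma Tstar_conjugate: "g \<in> Tstar \<Longrightarrow> x \<in> Tstar \<Longrightarrow> g * x * inverse g \<in> Tstar"
  by (simp add: Tstar_mult Tstar_inverse)

lemma Tstar_centralizer:
  assumes x: "x \<in> Tstar" "qre x = 1/2 \<or> qre x = 0" and q: "q \<in> Tstar" and c: "q * x = x * q"
  shows "q \<in> {1, -1, x, -x, inverse x, - inverse x}"
proof -
  obtain v where v: "v \<in> set Tstar_codes" "x = quat_of_code v" using x(1) by (rule Tstar_obtain_code)
  obtain w where w: "w \<in> set Tstar_codes" "q = quat_of_code w" using q by (rule Tstar_obtain_code)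
  have f: "fst v \<in> {0,1}" using x(2) v by (auto simp: qre_quat_of_code)
  have "quat_of_code (code_mult v w) = quat_of_code (code_mult w v)" using c v w quat_of_code_mult by metis
  then have "code_mult v w = code_mult w v" by (rule quat_of_code_inj)
  then have "w \<in> {(2,0,0,0), (-2,0,0,0), v, code_neg v, code_cnj v, code_neg (code_cnj v)}"
    using code_centralizers v(1) w(1) f unfolding list_all_iff by blast
  then show ?thesis
    using w v inverse_quat_of_code[OF v(1)]
    by (auto simp: quat_of_code_one quat_of_code_minus_one quat_of_code_neg)
qed

lemma Tstar_power_eq_minus_one:
  assumes x: "x \<in> Tstar"
  shows "qre x = 1/2 \<Longrightarrow> x ^ 3 = -1 \<and> (\<forall>k. 0 < k \<and> k < 3 \<longrightarrow> x ^ k \<noteq> 1 \<and> x ^ k \<noteq> -1)"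
    and "qre x = 0 \<Longrightarrow> x ^ 2 = -1 \<and> (\<forall>k. 0 < k \<and> k < 2 \<longrightarrow> x ^ k \<noteq> 1 \<and> x ^ k \<noteq> -1)"
proof -
  obtain v where v: "v \<in> set Tstar_codes" "x = quat_of_code v" using x by (rule Tstar_obtain_code)
  have pm1: "quat_of_code w \<noteq> 1 \<and> quat_of_code w \<noteq> -1" if "w \<notin> {(2,0,0,0),(-2,0,0,0)}" for w
    using that quat_of_code_inj[of w "(2,0,0,0)"] quat_of_code_inj[of w "(-2,0,0,0)"]
    by (auto simp: quat_of_code_one quat_of_code_minus_one)
  have p: "quat_of_code v ^ n = quat_of_code (code_power v n)" for n using power_quat_of_code v(1) by metis
  have "(fst v = 1 \<longrightarrow> code_power v 3 = (-2,0,0,0)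
        \<and> v \<notin> {(2,0,0,0),(-2,0,0,0)} \<and> code_power v 2 \<notin> {(2,0,0,0),(-2,0,0,0)})
     \<and> (fst v = 0 \<longrightarrow> code_power v 2 = (-2,0,0,0) \<and> v \<notin> {(2,0,0,0),(-2,0,0,0)})"
    using code_orders v(1) unfolding list_all_iff by (rule bspec)
  note orders = conjunct1[OF this] conjunct2[OF this]
  have k2: "0 < k \<and> k < 2 \<longleftrightarrow> k = 1" and k3: "0 < k \<and> k < 3 \<longleftrightarrow> k = 1 \<or> k = 2" for k :: nat
    by auto
  show "qre x = 1/2 \<Longrightarrow> x ^ 3 = -1 \<and> (\<forall>k. 0 < k \<and> k < 3 \<longrightarrow> x ^ k \<noteq> 1 \<and> x ^ k \<noteq> -1)"
    using orders(1) pm1[of v] pm1[of "code_power v 2"] p[of 1, symmetric] unfolding k3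
    by (auto simp: v(2) qre_quat_of_code p quat_of_code_minus_one)
  show "qre x = 0 \<Longrightarrow> x ^ 2 = -1 \<and> (\<forall>k. 0 < k \<and> k < 2 \<longrightarrow> x ^ k \<noteq> 1 \<and> x ^ k \<noteq> -1)"
    using orders(2) pm1[of v] unfolding k2
    by (auto simp: v(2) qre_quat_of_code p quat_of_code_minus_one)
qed

lemma good_conjugate_iff:
  assumes g: "g \<in> Tstar" and x: "x \<in> Tstar"
  shows "is_black x \<Longrightarrow> black_good (g * x * inverse g) \<longleftrightarrow> black_good x"
    and "is_gray x \<Longrightarrow> gray_good (g * x * inverse g) \<longleftrightarrow> gray_good x"
proof -
  obtain v where v: "v \<in> set Tstar_codes" "g = quat_of_code v" using g by (rule Tstar_obtain_code)
  obtain w where w: "w \<in> set Tstar_codes" "x = quat_of_code w" using x by (rule Tstar_obtain_code)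
  define y where "y = code_mult (code_mult v w) (code_cnj v)"
  have y: "g * x * inverse g = quat_of_code y"
    using quat_of_code_mult[OF v(1) w(1)] inverse_quat_of_code[OF v(1)] v w
      quat_of_code_mult[of "code_mult v w" "code_cnj v"] by (simp add: y_def)
  have good: "black_good (quat_of_code u) \<longleftrightarrow> is_black (quat_of_code u) \<and> code_black_good u"
    "gray_good (quat_of_code u) \<longleftrightarrow> is_gray (quat_of_code u) \<and> code_gray_good u" for u
  proof -
    obtain a b c d where u: "u = (a,b,c,d)" by (cases u)
    have ijk: "qi (quat_of_code u) * qj (quat_of_code u) * qk (quat_of_code u) = real_of_int (b*c*d) / 8"
      by (simp add: u quat_of_code_def)
    have sign: "real_of_int n / 8 < 0 \<longleftrightarrow> n < 0" "real_of_int n / 8 > 0 \<longleftrightarrow> n > 0" for n :: int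
      by simp_all
    show "black_good (quat_of_code u) \<longleftrightarrow> is_black (quat_of_code u) \<and> code_black_good u"
      "gray_good (quat_of_code u) \<longleftrightarrow> is_gray (quat_of_code u) \<and> code_gray_good u"
      unfolding black_good_def gray_good_def ijk sign by (simp_all add: u)
  qed
  have re: "qre (g * x * inverse g) = qre x" using qre_conjugate Tstar_nonzero[OF g] by blast
  have yT: "g * x * inverse g \<in> Tstar" using g x by (rule Tstar_conjugate)
  have "(fst w = 1 \<longrightarrow> (code_black_good y \<longleftrightarrow> code_black_good w)) \<and>
     (fst w = -1 \<longrightarrow> (code_gray_good y \<longleftrightarrow> code_gray_good w))"
    using code_conj_good v(1) w(1) unfolding list_all_iff y_def Let_def by blast
  moreover have "is_black x \<Longrightarrow> fst w = 1" "is_gray x \<Longrightarrow> fst w = -1"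
    using w(2) by (simp_all add: is_black_def is_gray_def qre_quat_of_code)
  ultimately show "is_black x \<Longrightarrow> black_good (g * x * inverse g) \<longleftrightarrow> black_good x"
    and "is_gray x \<Longrightarrow> gray_good (g * x * inverse g) \<longleftrightarrow> gray_good x"
    using y w re yT x good by (auto simp: is_black_def is_gray_def)
qed

section \<open>Classes of elements with cyclic centralizers\<close>

lemma power_int_mod_order:
  fixes x :: "'a::division_ring"
  assumes "x \<noteq> 0" "x ^ N = 1" "N > 0"
  shows "x powi k = x ^ nat (k mod int N)"
proof -
  have "x powi k = x powi (int N * (k div int N) + k mod int N)" by simp
  also have "\<dots> = x powi (int N * (k div int N)) * x powi (k mod int N)"
    by (rule power_int_add) (simp add: assms(1))
  also have "x powi (int N * (k div int N)) = 1"
    by (simp add: power_int_mult assms)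
  also have "x powi (k mod int N) = x ^ nat (k mod int N)"
    using assms(3) by (simp add: power_int_nonneg_exp)
  finally show ?thesis by simp
qed

lemma power_eq_imp_eq_below_order:
  fixes x :: "'a::division_ring"
  assumes "x \<noteq> 0" "\<forall>k. 0 < k \<and> k < N \<longrightarrow> x ^ k \<noteq> 1" "a < N" "b < N" "x ^ a = x ^ b"
  shows "a = b"
proof -
  have "x ^ c \<noteq> x ^ d" if "c < d" "d < N" for c d
  proof
    assume e: "x ^ c = x ^ d"
    have "x ^ d = x ^ c * x ^ (d - c)" using that by (simp flip: power_add)
    then have "x ^ c * x ^ (d - c) = x ^ c * 1" using e by simp
    then have "x ^ (d - c) = 1" using assms(1) by simp
    with assms(2) that show False by auto
  qed
  with assms(3-5) show ?thesis by (metis linorder_neqE_nat)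
qed

lemma power_int_eq_iff_mod:
  fixes x :: "'a::division_ring"
  assumes "x \<noteq> 0" "x ^ N = 1" "N > 0" "\<forall>k. 0 < k \<and> k < N \<longrightarrow> x ^ k \<noteq> 1"
  shows "x powi k = x powi m \<longleftrightarrow> k mod int N = m mod int N"
proof -
  have a: "nat (k mod int N) < N" "nat (m mod int N) < N" using assms(3) by (simp_all add: nat_less_iff)
  have "x powi k = x powi m \<longleftrightarrow> x ^ nat (k mod int N) = x ^ nat (m mod int N)"
    by (simp only: power_int_mod_order[OF assms(1-3)])
  also have "\<dots> \<longleftrightarrow> nat (k mod int N) = nat (m mod int N)"
    using power_eq_imp_eq_below_order[OF assms(1,4) a] by auto
  also have "\<dots> \<longleftrightarrow> k mod int N = m mod int N" using assms(3) by (simp add: eq_nat_nat_iff)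
  finally show ?thesis .
qed

lemma order_of_power_eq_minus_one:
  fixes x :: "'a::ring_1"
  assumes xm: "x ^ m = -1" and "(-1::'a) \<noteq> 1" and below: "\<forall>k. 0 < k \<and> k < m \<longrightarrow> x ^ k \<noteq> 1 \<and> x ^ k \<noteq> -1"
  shows "x ^ (2 * m) = 1" and "\<forall>k. 0 < k \<and> k < 2 * m \<longrightarrow> x ^ k \<noteq> 1"
proof -
  show "x ^ (2 * m) = 1" by (simp add: mult_2 power_add xm)
  show "\<forall>k. 0 < k \<and> k < 2 * m \<longrightarrow> x ^ k \<noteq> 1"
  proof (intro allI impI)
    fix k assume k: "0 < k \<and> k < 2 * m"
    consider "k < m" | "k = m" | "m < k" by linarith
    then show "x ^ k \<noteq> 1"
    proof cases
      case 3
      have "x ^ k = - (x ^ (k - m))" using 3 xm by (metis add_diff_inverse_nat less_imp_not_less power_add mult_minus1)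
      moreover have "x ^ (k - m) \<noteq> -1" using below k 3 \<open>(-1::'a) \<noteq> 1\<close> by (cases "k - m = 0") auto
      ultimately show ?thesis by (metis minus_equation_iff)
    qed (use below k xm \<open>(-1::'a) \<noteq> 1\<close> in auto)
  qed
qed

lemma Tstar_centralizer_powers:
  assumes x: "x \<in> Tstar" "qre x = 1/2 \<or> qre x = 0" and xm: "x ^ m = -1"
    and q: "q \<in> Tstar" "q * x = x * q"
  shows "\<exists>k. q = x ^ k"
proof -
  have "m \<noteq> 0" using xm quat_minus_one_neq_one by (metis power_0)
  have "x * x ^ (2 * m - 1) = 1"
    using \<open>m \<noteq> 0\<close> xm by (simp add: mult_2 power_add flip: power_Suc)
  then have inv: "inverse x = x ^ (2 * m - 1)" by (rule inverse_unique)
  have "q \<in> {1, -1, x, -x, inverse x, - inverse x}" using Tstar_centralizer x q by blast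
  moreover have "-1 = x ^ m" "- x = x ^ (m + 1)" "- inverse x = x ^ (m + (2 * m - 1))"
    by (simp_all add: xm inv power_add)
  ultimately show ?thesis by (metis empty_iff insert_iff inv power_0 power_one_right)
qed

text \<open>The properties of a label class that make \<open>Q'(L)\<close> a well-defined element of \<open>\<int>\<^sub>N\<close>.\<close>

definition cyclic_class :: "(quat \<Rightarrow> bool) \<Rightarrow> int \<Rightarrow> bool" where
  "cyclic_class P N \<longleftrightarrow> N > 0
     \<and> (\<forall>x. P x \<longrightarrow> x \<in> Tstar \<and> (\<forall>k m. x powi k = x powi m \<longleftrightarrow> k mod N = m mod N))
     \<and> (\<forall>x g. P x \<longrightarrow> g \<in> Tstar \<longrightarrow> P (g * x * inverse g))
     \<and> (\<forall>x q. P x \<longrightarrow> q \<in> Tstar \<longrightarrow> q * x = x * q \<longrightarrow> (\<exists>k::nat. q = x ^ k))"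

lemma cyclic_classI:
  assumes "\<And>x. P x \<Longrightarrow> x \<in> Tstar \<and> (qre x = 1/2 \<or> qre x = 0) \<and> x ^ m = -1
      \<and> (\<forall>k. 0 < k \<and> k < m \<longrightarrow> x ^ k \<noteq> 1 \<and> x ^ k \<noteq> -1)"
    and "0 < m" and "\<And>x g. P x \<Longrightarrow> g \<in> Tstar \<Longrightarrow> P (g * x * inverse g)"
  shows "cyclic_class P (2 * int m)"
  unfolding cyclic_class_def
proof (intro conjI allI impI)
  fix x assume "P x"
  then have x: "x \<in> Tstar" "qre x = 1/2 \<or> qre x = 0" "x ^ m = -1"
      "\<forall>k. 0 < k \<and> k < m \<longrightarrow> x ^ k \<noteq> 1 \<and> x ^ k \<noteq> -1"
    using assms(1) by blast+
  note order = order_of_power_eq_minus_one[OF x(3) quat_minus_one_neq_one x(4)]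
  show "x \<in> Tstar" by (fact x(1))
  fix k l show "x powi k = x powi l \<longleftrightarrow> k mod (2 * int m) = l mod (2 * int m)"
    using power_int_eq_iff_mod[OF Tstar_nonzero[OF x(1)] order(1) _ order(2)] assms(2) by simp
next
  fix x q assume "P x" "q \<in> Tstar" "q * x = x * q"
  then show "\<exists>k. q = x ^ k" using Tstar_centralizer_powers assms(1) by blast
qed (use assms in auto)

lemma cyclic_class_black: "cyclic_class is_black 6"
proof -
  have "cyclic_class is_black (2 * int 3)"
  proof (rule cyclic_classI)
    fix x g assume "is_black x" "g \<in> Tstar"
    then show "is_black (g * x * inverse g)"
      by (simp add: is_black_def qre_conjugate Tstar_nonzero Tstar_conjugate)
  qed (auto simp: is_black_def Tstar_power_eq_minus_one(1))
  then show ?thesis by simp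
qed

lemma cyclic_class_Q8loop: "cyclic_class is_Q8loop 4"
proof -
  have "cyclic_class is_Q8loop (2 * int 2)"
  proof (rule cyclic_classI)
    fix x g assume "is_Q8loop x" "g \<in> Tstar"
    then show "is_Q8loop (g * x * inverse g)"
      by (simp add: is_Q8loop_def qre_conjugate Tstar_nonzero Tstar_conjugate)
  qed (auto simp: is_Q8loop_def Tstar_power_eq_minus_one(2))
  then show ?thesis by simp
qed

section \<open>Conjugation systems\<close>

text \<open>Abstract setting: a permutation \<open>p\<close> of a finite set (the successor map on edges), factors
  \<open>u\<close> and labels \<open>\<chi>\<close>; \<open>holonomy p u b\<close> is \<open>q(L,b)\<close> and \<open>orbit_exponent p u \<chi> L\<close> is \<open>Q'(L)\<close>.\<close>

definition conj_system :: "'a set \<Rightarrow> ('a \<Rightarrow> 'a) \<Rightarrow> ('a \<Rightarrow> quat) \<Rightarrow> ('a \<Rightarrow> quat) \<Rightarrow> bool" where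
  "conj_system A p u \<chi> \<longleftrightarrow> finite A \<and> p permutes A
     \<and> (\<forall>a\<in>A. u a \<in> Tstar \<and> \<chi> a \<in> Tstar \<and> \<chi> (p a) = u a * \<chi> a * inverse (u a))"

definition cycle_length :: "('a \<Rightarrow> 'a) \<Rightarrow> 'a \<Rightarrow> nat" where
  "cycle_length p a = (LEAST n. 0 < n \<and> (p ^^ n) a = a)"

primrec path_prod :: "('a \<Rightarrow> 'a) \<Rightarrow> ('a \<Rightarrow> quat) \<Rightarrow> 'a \<Rightarrow> nat \<Rightarrow> quat" where
  "path_prod p u a 0 = 1"
| "path_prod p u a (Suc t) = u ((p ^^ t) a) * path_prod p u a t"

abbreviation holonomy :: "('a \<Rightarrow> 'a) \<Rightarrow> ('a \<Rightarrow> quat) \<Rightarrow> 'a \<Rightarrow> quat" where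
  "holonomy p u a \<equiv> path_prod p u a (cycle_length p a)"

definition orbit_exponent :: "('a \<Rightarrow> 'a) \<Rightarrow> ('a \<Rightarrow> quat) \<Rightarrow> ('a \<Rightarrow> quat) \<Rightarrow> 'a set \<Rightarrow> int" where
  "orbit_exponent p u \<chi> L = (SOME k. \<forall>b\<in>L. holonomy p u b = \<chi> b powi k)"

definition exponent_sum ::
    "(quat \<Rightarrow> bool) \<Rightarrow> int \<Rightarrow> 'a set \<Rightarrow> ('a \<Rightarrow> 'a) \<Rightarrow> ('a \<Rightarrow> quat) \<Rightarrow> ('a \<Rightarrow> quat) \<Rightarrow> int" where
  "exponent_sum P N A p u \<chi> = (\<Sum>L\<in>{L \<in> orbit p ` A. \<forall>e\<in>L. P (\<chi> e)}. orbit_exponent p u \<chi> L) mod N"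

lemma cycle_length:
  assumes "permutation p"
  shows "0 < cycle_length p a" and "(p ^^ cycle_length p a) a = a"
    and "\<And>t. 0 < t \<Longrightarrow> t < cycle_length p a \<Longrightarrow> (p ^^ t) a \<noteq> a"
proof -
  obtain n where "0 < n" "(p ^^ n) a = a" using permutation_self[OF assms] by blast
  then have "0 < cycle_length p a \<and> (p ^^ cycle_length p a) a = a"
    unfolding cycle_length_def by (intro LeastI[where P = "\<lambda>n. 0 < n \<and> (p ^^ n) a = a"]) blast
  then show "0 < cycle_length p a" "(p ^^ cycle_length p a) a = a" by auto
  show "\<And>t. 0 < t \<Longrightarrow> t < cycle_length p a \<Longrightarrow> (p ^^ t) a \<noteq> a"
    unfolding cycle_length_def using not_less_Least by blast
qed

lemma cycle_lengthI:
  assumes "0 < n" "(p ^^ n) a = a" "\<And>t. 0 < t \<Longrightarrow> t < n \<Longrightarrow> (p ^^ t) a \<noteq> a"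
  shows "cycle_length p a = n"
  unfolding cycle_length_def using assms by (intro Least_equality) (auto simp: not_less[symmetric])

lemma orbit_eq_cycle_length:
  "permutation p \<Longrightarrow> orbit p a = {(p ^^ t) a | t. t < cycle_length p a}"
  by (intro orbit_altdef_bounded cycle_length)

lemma orbit_eq_of_mem: "permutation p \<Longrightarrow> b \<in> orbit p a \<Longrightarrow> orbit p b = orbit p a"
  by (intro orbit_cyclic_eq3 cyclic_on_orbit')

lemma funpow_in_orbit_self: "permutation p \<Longrightarrow> (p ^^ n) a \<in> orbit p a"
  by (simp add: funpow_in_orbit permutation_self_in_orbit)

lemma cycle_length_orbit_eq:
  assumes "permutation p" "b \<in> orbit p a" shows "cycle_length p b = cycle_length p a"
proof -
  obtain j where b: "b = (p ^^ j) a" using assms(2) orbit_altdef_permutation[OF assms(1)] by blast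
  obtain k where a: "a = (p ^^ k) b"
    using orbit_swap[OF permutation_self_in_orbit[OF assms(1)] assms(2)] orbit_altdef_permutation[OF assms(1)]
    by blast
  have comm: "(p ^^ n) ((p ^^ m) x) = (p ^^ m) ((p ^^ n) x)" for n m x
    by (metis add.commute comp_apply funpow_add)
  have "(p ^^ n) b = b \<longleftrightarrow> (p ^^ n) a = a" for n
    by (metis a b comm)
  then show ?thesis unfolding cycle_length_def by simp
qed

lemma conj_system_permutation: "conj_system A p u \<chi> \<Longrightarrow> permutation p"
  by (auto simp: conj_system_def permutation_permutes)

lemma conj_system_funpow_in: "conj_system A p u \<chi> \<Longrightarrow> a \<in> A \<Longrightarrow> (p ^^ n) a \<in> A"
  by (simp add: conj_system_def permutes_in_funpow_image)

lemma conj_system_orbit_subset: "conj_system A p u \<chi> \<Longrightarrow> a \<in> A \<Longrightarrow> orbit p a \<subseteq> A"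
  by (simp add: conj_system_def permutes_orbit_subset)

lemma path_prod_add: "path_prod p u a (s + t) = path_prod p u ((p ^^ s) a) t * path_prod p u a s"
proof (induction t)
  case (Suc t)
  have "(p ^^ (s + t)) a = (p ^^ (t + s)) a" by (simp add: add.commute)
  then have "(p ^^ (s + t)) a = (p ^^ t) ((p ^^ s) a)" by (simp only: funpow_add o_apply)
  then show ?case using Suc by (simp add: mult.assoc)
qed simp

lemma path_prod_Tstar: assumes "conj_system A p u \<chi>" "a \<in> A" shows "path_prod p u a t \<in> Tstar"
proof (induction t)
  case (Suc t)
  have "(p ^^ t) a \<in> A" using assms by (rule conj_system_funpow_in)
  then have "u ((p ^^ t) a) \<in> Tstar" using assms(1) by (simp add: conj_system_def)
  then show ?case using Suc by (simp add: Tstar_mult)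
qed (simp add: Tstar_one)

lemma label_along_path:
  assumes "conj_system A p u \<chi>" "a \<in> A"
  shows "\<chi> ((p ^^ t) a) = path_prod p u a t * \<chi> a * inverse (path_prod p u a t)"
proof (induction t)
  case (Suc t)
  define g where "g = u ((p ^^ t) a)"
  define h where "h = path_prod p u a t"
  have "(p ^^ t) a \<in> A" using assms by (rule conj_system_funpow_in)
  then have "g \<in> Tstar" and step: "\<chi> ((p ^^ Suc t) a) = g * \<chi> ((p ^^ t) a) * inverse g"
    using assms(1) by (simp_all add: conj_system_def g_def)
  moreover have "h \<in> Tstar" using path_prod_Tstar[OF assms] by (simp add: h_def)
  ultimately show ?case using Suc
    by (simp add: g_def[symmetric] h_def[symmetric] Tstar_nonzero nonzero_inverse_mult_distrib mult.assoc)
qed simp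

lemma power_conjugate:
  fixes h x :: "'a::division_ring" assumes "h \<noteq> 0"
  shows "(h * x * inverse h) ^ n = h * x ^ n * inverse h"
proof (induction n)
  case (Suc n)
  have "(h * x * inverse h) ^ Suc n = h * x * (inverse h * h) * x ^ n * inverse h"
    using Suc by (simp add: mult.assoc)
  also have "\<dots> = h * x ^ Suc n * inverse h" using assms by (simp add: mult.assoc)
  finally show ?case .
qed (use assms in simp)

lemma holonomy_power:
  assumes "conj_system A p u \<chi>" "cyclic_class P N" "a \<in> A" "P (\<chi> a)"
  shows "\<exists>k::nat. holonomy p u a = \<chi> a ^ k"
proof -
  define q where "q = holonomy p u a"
  have qT: "q \<in> Tstar" unfolding q_def using path_prod_Tstar[OF assms(1,3)] .
  have eq: "\<chi> a = q * \<chi> a * inverse q"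
    using label_along_path[OF assms(1,3), of "cycle_length p a"]
      cycle_length(2)[OF conj_system_permutation[OF assms(1)]] by (simp add: q_def)
  have "\<chi> a * q = q * \<chi> a * inverse q * q" using arg_cong[OF eq, of "\<lambda>z. z * q"] .
  also have "\<dots> = q * \<chi> a" using Tstar_nonzero[OF qT] by (simp add: mult.assoc)
  finally have "q * \<chi> a = \<chi> a * q" by simp
  then show ?thesis using assms(2,4) qT unfolding q_def cyclic_class_def by blast
qed

lemma holonomy_basepoint:
  assumes sys: "conj_system A p u \<chi>" and a: "a \<in> A" and k: "holonomy p u a = \<chi> a ^ k"
    and b: "b \<in> orbit p a"
  shows "holonomy p u b = \<chi> b ^ k"
proof -
  have perm: "permutation p" using sys by (rule conj_system_permutation)
  obtain j where bj: "b = (p ^^ j) a" using b orbit_altdef_permutation[OF perm] by blast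
  define n where "n = cycle_length p a"
  define h where "h = path_prod p u a j"
  have h0: "h \<noteq> 0" using path_prod_Tstar[OF sys a] Tstar_nonzero by (simp add: h_def)
  have "path_prod p u b n * h = path_prod p u a (j + n)"
    using path_prod_add[of p u a j n] by (simp add: bj h_def)
  also have "\<dots> = path_prod p u a (n + j)" by (simp add: add.commute)
  also have "\<dots> = h * \<chi> a ^ k"
    using path_prod_add[of p u a n j] cycle_length(2)[OF perm, of a] k by (simp add: h_def n_def)
  finally have "path_prod p u b n * h * inverse h = h * \<chi> a ^ k * inverse h" by simp
  then have "path_prod p u b n = h * \<chi> a ^ k * inverse h" using h0 by (simp add: mult.assoc)
  also have "\<dots> = (h * \<chi> a * inverse h) ^ k" by (simp add: power_conjugate[OF h0])
  also have "h * \<chi> a * inverse h = \<chi> b" using label_along_path[OF sys a, of j] by (simp add: bj h_def)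
  finally show ?thesis using cycle_length_orbit_eq[OF perm b] by (simp add: n_def)
qed

lemma class_orbit_iff:
  assumes sys: "conj_system A p u \<chi>" and P: "cyclic_class P N" and "a \<in> A" "b \<in> orbit p a"
  shows "P (\<chi> b) \<longleftrightarrow> P (\<chi> a)"
proof -
  have perm: "permutation p" using sys by (rule conj_system_permutation)
  have "P (\<chi> y)" if x: "x \<in> A" and y: "y \<in> orbit p x" and Px: "P (\<chi> x)" for x y
  proof -
    obtain j where yj: "y = (p ^^ j) x" using y orbit_altdef_permutation[OF perm] by blast
    have "P (path_prod p u x j * \<chi> x * inverse (path_prod p u x j))"
      using P path_prod_Tstar[OF sys x] Px unfolding cyclic_class_def by blast
    then show ?thesis using label_along_path[OF sys x] yj by simp
  qed
  moreover have "b \<in> A" using conj_system_orbit_subset[OF sys assms(3)] assms(4) by blast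
  moreover have "a \<in> orbit p b" by (rule orbit_swap[OF permutation_self_in_orbit[OF perm] assms(4)])
  ultimately show ?thesis using assms(3,4) by blast
qed

lemma orbit_exponent_mod:
  assumes sys: "conj_system A p u \<chi>" and P: "cyclic_class P N" and a: "a \<in> A" "P (\<chi> a)"
    and k: "holonomy p u a = \<chi> a powi k"
  shows "orbit_exponent p u \<chi> (orbit p a) mod N = k mod N"
proof -
  obtain k0 :: nat where k0: "holonomy p u a = \<chi> a ^ k0" using holonomy_power[OF sys P a] by blast
  have "\<forall>b\<in>orbit p a. holonomy p u b = \<chi> b powi (int k0)"
    using holonomy_basepoint[OF sys a(1) k0] by simp
  then have "\<forall>b\<in>orbit p a. holonomy p u b = \<chi> b powi (orbit_exponent p u \<chi> (orbit p a))"
    unfolding orbit_exponent_def by (rule someI)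
  then have "\<chi> a powi (orbit_exponent p u \<chi> (orbit p a)) = \<chi> a powi k"
    using permutation_self_in_orbit[OF conj_system_permutation[OF sys]] k by metis
  then show ?thesis using P a(2) unfolding cyclic_class_def by blast
qed

lemma exponent_sum_cong_labels:
  assumes "p permutes A" "\<forall>a\<in>A. \<chi> a = \<chi>' a"
  shows "exponent_sum P N A p u \<chi> = exponent_sum P N A p u \<chi>'"
proof -
  have L: "\<forall>b\<in>L. \<chi> b = \<chi>' b" if L: "L \<in> orbit p ` A" for L
  proof -
    obtain x where "x \<in> A" "L = orbit p x" using L by blast
    then show ?thesis using assms permutes_orbit_subset[OF assms(1)] by blast
  qed
  then have "{L \<in> orbit p ` A. \<forall>e\<in>L. P (\<chi> e)} = {L \<in> orbit p ` A. \<forall>e\<in>L. P (\<chi>' e)}"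
    by (metis (no_types, lifting))
  moreover have "orbit_exponent p u \<chi> L = orbit_exponent p u \<chi>' L" if "L \<in> orbit p ` A" for L
    using L[OF that] unfolding orbit_exponent_def by simp
  ultimately show ?thesis unfolding exponent_sum_def by (auto intro: sum.cong)
qed

lemma conj_system_insert_fixed:
  assumes sys: "conj_system A p u \<chi>" and "fr \<notin> A" "p fr = fr" "u fr = 1" "x \<in> Tstar"
    and "\<forall>a\<in>A. \<chi>' a = \<chi> a" "\<chi>' fr = x"
  shows "conj_system (insert fr A) p u \<chi>'"
proof -
  have "p permutes A" and loc: "\<forall>a\<in>A. u a \<in> Tstar \<and> \<chi> a \<in> Tstar \<and> \<chi> (p a) = u a * \<chi> a * inverse (u a)"
    using sys by (auto simp: conj_system_def)
  then have "p permutes insert fr A" "\<forall>a\<in>A. p a \<in> A"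
    by (auto intro: permutes_subset simp: permutes_in_image)
  then show ?thesis using sys loc assms(2-) Tstar_one by (auto simp: conj_system_def)
qed

lemma exponent_sum_remove_fixed:
  assumes sys: "conj_system A p u \<chi>" and P: "cyclic_class P N" and f: "f \<in> A" "p f = f" "u f = 1"
  shows "exponent_sum P N (A - {f}) p u \<chi> = exponent_sum P N A p u \<chi>"
proof -
  have perm: "permutation p" using sys by (rule conj_system_permutation)
  have of: "orbit p f = {f}" using f(2) by (simp add: orbit_eq_singleton_iff)
  have "cycle_length p f = 1" using f(2) by (intro cycle_lengthI) auto
  then have hol: "holonomy p u f = \<chi> f powi 0" using f(3) by simp
  have "f \<notin> orbit p x" if "x \<in> A - {f}" for x
    using that orbit_eq_of_mem[OF perm] permutation_self_in_orbit[OF perm] of by blast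
  then have nf: "{f} \<notin> orbit p ` (A - {f})" by blast
  have img: "orbit p ` A = insert {f} (orbit p ` (A - {f}))" using f(1) of by blast
  define S where "S = {L \<in> orbit p ` (A - {f}). \<forall>e\<in>L. P (\<chi> e)}"
  show ?thesis
  proof (cases "P (\<chi> f)")
    case True
    have "finite S" using sys by (simp add: conj_system_def S_def)
    moreover have "{f} \<notin> S" using nf by (simp add: S_def)
    moreover have "{L \<in> orbit p ` A. \<forall>e\<in>L. P (\<chi> e)} = insert {f} S"
      using True unfolding img S_def by blast
    moreover have "orbit_exponent p u \<chi> {f} mod N = 0"
      using orbit_exponent_mod[OF sys P f(1) True hol] of by simp
    ultimately show ?thesis unfolding exponent_sum_def S_def by (simp add: mod_add_left_eq[symmetric])
  next
    case False
    then have "{L \<in> orbit p ` A. \<forall>e\<in>L. P (\<chi> e)} = S" unfolding img S_def by blast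
    then show ?thesis unfolding exponent_sum_def S_def by simp
  qed
qed

lemma orbit_agree:
  assumes "permutation p" and agree: "\<forall>y\<in>orbit p x. p' y = p y \<and> u' y = u y"
  shows "orbit p' x = orbit p x" "cycle_length p' x = cycle_length p x"
    "path_prod p' u' x t = path_prod p u x t"
proof -
  have it: "(p' ^^ t) x = (p ^^ t) x" for t
    by (induction t) (simp_all add: agree funpow_in_orbit_self[OF assms(1)])
  show "orbit p' x = orbit p x" "cycle_length p' x = cycle_length p x"
    by (simp_all add: orbit_altdef cycle_length_def it)
  show "path_prod p' u' x t = path_prod p u x t"
    by (induction t) (simp_all add: it agree funpow_in_orbit_self[OF assms(1)])
qed

lemma orbit_mem_trans: "permutation p \<Longrightarrow> y \<in> orbit p x \<Longrightarrow> y \<in> orbit p e \<Longrightarrow> x \<in> orbit p e"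
  using orbit_eq_of_mem permutation_self_in_orbit by metis

lemma orbit_image_merge:
  assumes perm: "finite A" "p permutes A" "p' permutes A" and e: "e1 \<in> A" "e2 \<in> A"
    and agree: "\<forall>y\<in>A. y \<notin> orbit p e1 \<union> orbit p e2 \<longrightarrow> p' y = p y"
    and orb: "orbit p' e1 = orbit p e1 \<union> orbit p e2"
  shows "orbit p' ` A = insert (orbit p e1 \<union> orbit p e2) (orbit p ` A - {orbit p e1, orbit p e2})"
proof -
  define M where "M = orbit p e1 \<union> orbit p e2"
  have pp: "permutation p" "permutation p'" using perm by (auto simp: permutation_permutes)
  have in_M: "orbit p y = orbit p e1 \<or> orbit p y = orbit p e2" if "y \<in> M" for y
    using that orbit_eq_of_mem[OF pp(1)] by (auto simp: M_def)
  have out_M: "orbit p' y = orbit p y" if y: "y \<in> A" "y \<notin> M" for y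
  proof (rule orbit_cong[OF permutation_self_in_orbit[OF pp(1)]])
    fix z assume z: "z \<in> orbit p y"
    have "z \<in> A" using permutes_orbit_subset[OF perm(2) y(1)] z by blast
    moreover have "z \<notin> M"
      using orbit_mem_trans[OF pp(1) z, of e1] orbit_mem_trans[OF pp(1) z, of e2] y(2) by (auto simp: M_def)
    ultimately show "p' z = p z" using agree by (simp add: M_def)
  qed
  have "orbit p' y \<in> insert M (orbit p ` A - {orbit p e1, orbit p e2})" if "y \<in> A" for y
  proof (cases "y \<in> M")
    case True
    then have "y \<in> orbit p' e1" using orb by (simp add: M_def)
    then have "orbit p' y = orbit p' e1" by (rule orbit_eq_of_mem[OF pp(2)])
    then show ?thesis using orb by (simp add: M_def)
  next
    case False
    then have "orbit p y \<noteq> orbit p e1" "orbit p y \<noteq> orbit p e2"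
      using permutation_self_in_orbit[OF pp(1), of y] by (auto simp: M_def)
    then show ?thesis using out_M[OF that False] that by simp
  qed
  moreover have "L \<in> orbit p' ` A" if L: "L \<in> insert M (orbit p ` A - {orbit p e1, orbit p e2})" for L
  proof (cases "L = M")
    case True then show ?thesis using orb e(1) by (auto simp: M_def)
  next
    case False
    then obtain y where y: "y \<in> A" "L = orbit p y" "L \<noteq> orbit p e1" "L \<noteq> orbit p e2" using L by blast
    then have "y \<notin> M" using in_M by blast
    then show ?thesis using y out_M by blast
  qed
  ultimately show ?thesis unfolding M_def by blast
qed

lemma orbit_exponent_agree:
  assumes perm: "permutation p" and agree: "\<forall>z\<in>orbit p x. p' z = p z \<and> u' z = u z"
  shows "orbit_exponent p' u' \<chi> (orbit p x) = orbit_exponent p u \<chi> (orbit p x)"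
proof -
  have "holonomy p' u' b = holonomy p u b" if "b \<in> orbit p x" for b
    using orbit_agree[OF perm] agree orbit_eq_of_mem[OF perm that] by metis
  then show ?thesis unfolding orbit_exponent_def by simp
qed

lemma orbit_exponent_merge:
  assumes sys: "conj_system A p u \<chi>" and sys': "conj_system A p' u' \<chi>" and P: "cyclic_class P N"
    and e: "e1 \<in> A" "e2 \<in> A" and P1: "P (\<chi> e1)" and lab: "\<chi> e1 = \<chi> e2"
    and orb: "orbit p' e1 = orbit p e1 \<union> orbit p e2"
    and hol: "holonomy p' u' e1 = holonomy p u e1 * holonomy p u e2
        \<or> holonomy p' u' e1 = holonomy p u e2 * holonomy p u e1"
  shows "orbit_exponent p' u' \<chi> (orbit p e1 \<union> orbit p e2) mod N
    = (orbit_exponent p u \<chi> (orbit p e1) + orbit_exponent p u \<chi> (orbit p e2)) mod N"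
proof -
  have P2: "P (\<chi> e2)" using P1 lab by simp
  obtain k1 k2 :: nat where k: "holonomy p u e1 = \<chi> e1 ^ k1" "holonomy p u e2 = \<chi> e1 ^ k2"
    using holonomy_power[OF sys P e(1) P1] holonomy_power[OF sys P e(2) P2] lab by metis
  moreover have "\<chi> e1 ^ k1 * \<chi> e1 ^ k2 = \<chi> e1 powi int (k1 + k2)"
    "\<chi> e1 ^ k2 * \<chi> e1 ^ k1 = \<chi> e1 powi int (k1 + k2)"
    by (simp_all only: power_add[symmetric] power_int_of_nat add.commute)
  ultimately have "holonomy p' u' e1 = \<chi> e1 powi int (k1 + k2)"
    using hol by metis
  then have "orbit_exponent p' u' \<chi> (orbit p e1 \<union> orbit p e2) mod N = (int k1 + int k2) mod N"
    using orbit_exponent_mod[OF sys' P e(1) P1] orb by simp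
  also have "\<dots> = (orbit_exponent p u \<chi> (orbit p e1) + orbit_exponent p u \<chi> (orbit p e2)) mod N"
    using orbit_exponent_mod[OF sys P e(1) P1, of k1] orbit_exponent_mod[OF sys P e(2) P2, of k2] k lab
    by (intro mod_add_cong) simp_all
  finally show ?thesis .
qed

lemma exponent_sum_merge:
  assumes sys: "conj_system A p u \<chi>" and sys': "conj_system A p' u' \<chi>" and P: "cyclic_class P N"
    and e: "e1 \<in> A" "e2 \<in> A" and apart: "e2 \<notin> orbit p e1" and lab: "\<chi> e1 = \<chi> e2"
    and agree: "\<forall>y\<in>A. y \<notin> orbit p e1 \<union> orbit p e2 \<longrightarrow> p' y = p y \<and> u' y = u y"
    and orb: "orbit p' e1 = orbit p e1 \<union> orbit p e2"
    and hol: "holonomy p' u' e1 = holonomy p u e1 * holonomy p u e2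
        \<or> holonomy p' u' e1 = holonomy p u e2 * holonomy p u e1"
  shows "exponent_sum P N A p' u' \<chi> = exponent_sum P N A p u \<chi>"
proof -
  define O1 O2 where "O1 = orbit p e1" and "O2 = orbit p e2"
  define R where "R = {L \<in> orbit p ` A - {O1, O2}. \<forall>e\<in>L. P (\<chi> e)}"
  have perm: "permutation p" "permutation p'" using sys sys' by (simp_all add: conj_system_permutation)
  have img: "orbit p' ` A = insert (O1 \<union> O2) (orbit p ` A - {O1, O2})"
    using orbit_image_merge[of A p p' e1 e2] sys sys' e agree orb by (simp add: conj_system_def O1_def O2_def)
  have in_O: "orbit p y = O1 \<or> orbit p y = O2" if "y \<in> O1 \<union> O2" for y
    using that orbit_eq_of_mem[OF perm(1)] by (auto simp: O1_def O2_def)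
  have "O1 \<noteq> O2" using apart permutation_self_in_orbit[OF perm(1), of e2] by (auto simp: O1_def O2_def)
  have "O1 \<union> O2 \<notin> R"
    using in_O permutation_self_in_orbit[OF perm(1)] by (auto simp: R_def)
  have same: "orbit_exponent p' u' \<chi> L = orbit_exponent p u \<chi> L" if "L \<in> R" for L
  proof -
    obtain y where y: "y \<in> A" "L = orbit p y" "L \<noteq> O1" "L \<noteq> O2" using \<open>L \<in> R\<close> by (auto simp: R_def)
    have "\<forall>z\<in>orbit p y. p' z = p z \<and> u' z = u z"
      using agree conj_system_orbit_subset[OF sys y(1)] y in_O orbit_eq_of_mem[OF perm(1)]
      by (metis O1_def O2_def subsetD)
    then show ?thesis using orbit_exponent_agree[OF perm(1)] y(2) by metis
  qed
  have P_orbit: "(\<forall>e\<in>orbit q x. P (\<chi> e)) \<longleftrightarrow> P (\<chi> x)" if "conj_system A q v \<chi>" "x \<in> A" for q v x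
    using class_orbit_iff[OF that(1) P that(2)] permutation_self_in_orbit[OF conj_system_permutation[OF that(1)]]
    by blast
  show ?thesis
  proof (cases "P (\<chi> e1)")
    case True
    then have P2: "P (\<chi> e2)" using lab by simp
    have merged: "orbit_exponent p' u' \<chi> (O1 \<union> O2) mod N
        = (orbit_exponent p u \<chi> O1 + orbit_exponent p u \<chi> O2) mod N"
      using orbit_exponent_merge[OF sys sys' P e True lab orb hol] by (simp add: O1_def O2_def)
    have "{L \<in> orbit p ` A. \<forall>e\<in>L. P (\<chi> e)} = insert O1 (insert O2 R)"
      using P_orbit[OF sys e(1)] P_orbit[OF sys e(2)] True P2 e by (auto simp: R_def O1_def O2_def)
    moreover have "{L \<in> orbit p' ` A. \<forall>e\<in>L. P (\<chi> e)} = insert (O1 \<union> O2) R"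
      using P_orbit[OF sys' e(1)] True orb unfolding img by (auto simp: R_def O1_def O2_def)
    moreover have "finite R" using sys by (simp add: conj_system_def R_def)
    moreover have "O1 \<notin> insert O2 R" "O2 \<notin> R" using \<open>O1 \<noteq> O2\<close> by (simp_all add: R_def)
    moreover have "sum (orbit_exponent p' u' \<chi>) R = sum (orbit_exponent p u \<chi>) R"
      using same by (rule sum.cong[OF refl])
    ultimately show ?thesis
      using \<open>O1 \<union> O2 \<notin> R\<close> mod_add_cong[OF merged refl] unfolding exponent_sum_def
      by (simp add: add.assoc)
  next
    case False
    then have "\<not> P (\<chi> e2)" using lab by simp
    then have "{L \<in> orbit p ` A. \<forall>e\<in>L. P (\<chi> e)} = R" "{L \<in> orbit p' ` A. \<forall>e\<in>L. P (\<chi> e)} = R"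
      using P_orbit[OF sys e(1)] P_orbit[OF sys e(2)] P_orbit[OF sys' e(1)] False orb
      unfolding img by (auto simp: R_def O1_def O2_def)
    then show ?thesis using same unfolding exponent_sum_def by simp
  qed
qed

lemma orbit_eq_upto:
  assumes "(q ^^ n) a = a" "0 < n" shows "orbit q a = {(q ^^ t) a | t. 0 < t \<and> t \<le> n}"
  unfolding orbit_altdef_bounded[OF assms]
proof (intro set_eqI iffI)
  fix x assume "x \<in> {(q ^^ t) a | t. t < n}"
  then obtain t where "t < n" "x = (q ^^ t) a" by blast
  then show "x \<in> {(q ^^ t) a | t. 0 < t \<and> t \<le> n}"
    using assms by (cases "t = 0") (auto intro: exI[of _ n] exI[of _ t])
next
  fix x assume "x \<in> {(q ^^ t) a | t. 0 < t \<and> t \<le> n}"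
  then obtain t where "0 < t" "t \<le> n" "x = (q ^^ t) a" by blast
  then show "x \<in> {(q ^^ t) a | t. t < n}"
    using assms by (cases "t = n") (auto intro: exI[of _ 0] exI[of _ t])
qed

lemma funpow_concat:
  assumes "(q ^^ m) a = b" shows "(q ^^ (m + s)) a = (q ^^ s) b"
  using assms by (metis add.commute comp_apply funpow_add)

lemma orbit_concat:
  assumes "(q ^^ m) a = b" "(q ^^ n) b = a" "0 < m + n"
  shows "orbit q a = {(q ^^ t) a | t. t < m} \<union> {(q ^^ t) b | t. t < n}"
    and "orbit q a = {(q ^^ t) a | t. 0 < t \<and> t \<le> m} \<union> {(q ^^ t) b | t. 0 < t \<and> t \<le> n}"
proof -
  have shift: "(q ^^ (m + s)) a = (q ^^ s) b" for s using assms(1) by (rule funpow_concat)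
  have ret: "(q ^^ (m + n)) a = a" using shift assms(2) by simp
  have split: "\<exists>s. t = m + s" if "\<not> t < m" for t using that le_Suc_ex by simp
  show "orbit q a = {(q ^^ t) a | t. t < m} \<union> {(q ^^ t) b | t. t < n}"
    unfolding orbit_altdef_bounded[OF ret assms(3)]
  proof (intro set_eqI iffI)
    fix x assume "x \<in> {(q ^^ t) a | t. t < m + n}"
    then obtain t where t: "t < m + n" "x = (q ^^ t) a" by blast
    show "x \<in> {(q ^^ t) a | t. t < m} \<union> {(q ^^ t) b | t. t < n}"
      using t shift split[of t] by (cases "t < m") auto
  qed (use shift in \<open>auto intro: exI[of _ "m + s" for s]\<close>)
  show "orbit q a = {(q ^^ t) a | t. 0 < t \<and> t \<le> m} \<union> {(q ^^ t) b | t. 0 < t \<and> t \<le> n}"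
    unfolding orbit_eq_upto[OF ret assms(3)]
  proof (intro set_eqI iffI)
    fix x assume "x \<in> {(q ^^ t) a | t. 0 < t \<and> t \<le> m + n}"
    then obtain t where t: "0 < t" "t \<le> m + n" "x = (q ^^ t) a" by blast
    show "x \<in> {(q ^^ t) a | t. 0 < t \<and> t \<le> m} \<union> {(q ^^ t) b | t. 0 < t \<and> t \<le> n}"
      using t shift split[of t] by (cases "t \<le> m") auto
  qed (use shift in \<open>auto intro: exI[of _ "m + s" for s]\<close>)
qed

lemma cycle_length_concat:
  assumes "(q ^^ m) a = b" "(q ^^ n) b = a" "0 < m"
    and "\<And>t. 0 < t \<Longrightarrow> t \<le> m \<Longrightarrow> (q ^^ t) a \<noteq> a" "\<And>s. 0 < s \<Longrightarrow> s < n \<Longrightarrow> (q ^^ s) b \<noteq> a"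
  shows "cycle_length q a = m + n"
proof (rule cycle_lengthI)
  show "(q ^^ (m + n)) a = a" using funpow_concat[OF assms(1)] assms(2) by simp
  fix t assume t: "0 < t" "t < m + n"
  show "(q ^^ t) a \<noteq> a"
  proof (cases "t \<le> m")
    case False
    define s where "s = t - m"
    have "t = m + s" "0 < s" "s < n" using t False by (auto simp: s_def)
    then show ?thesis using funpow_concat[OF assms(1)] assms(5) by simp
  qed (use assms(4) t in simp)
qed (use assms(3) in simp)

lemma funpow_swap_heads:
  assumes avoid: "\<forall>s. 0 < s \<and> s < m \<longrightarrow> (p ^^ s) b \<noteq> a \<and> (p ^^ s) b \<noteq> b"
  shows "0 < t \<Longrightarrow> t \<le> m \<Longrightarrow> ((p \<circ> transpose a b) ^^ t) a = (p ^^ t) b"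
proof (induction t)
  case (Suc t)
  then show ?case using avoid by (cases "t = 0") auto
qed simp

lemma path_prod_swap_heads:
  assumes avoid: "\<forall>s. 0 < s \<and> s < m \<longrightarrow> (p ^^ s) b \<noteq> a \<and> (p ^^ s) b \<noteq> b"
  shows "t \<le> m \<Longrightarrow> path_prod (p \<circ> transpose a b) (u \<circ> transpose a b) a t = path_prod p u b t"
proof (induction t)
  case (Suc t)
  have "(u \<circ> transpose a b) (((p \<circ> transpose a b) ^^ t) a) = u ((p ^^ t) b)"
  proof (cases "t = 0")
    case False
    then have "(p ^^ t) b \<noteq> a" "(p ^^ t) b \<noteq> b" using avoid Suc.prems by auto
    then show ?thesis using funpow_swap_heads[OF avoid, of t] False Suc.prems by simp
  qed simp
  then show ?case using Suc by (simp del: comp_apply)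
qed simp

lemma funpow_swap_tails:
  assumes avoid: "\<forall>s. 0 < s \<and> s < m \<longrightarrow> (p ^^ s) a \<noteq> a \<and> (p ^^ s) a \<noteq> b"
  shows "t < m \<Longrightarrow> ((transpose a b \<circ> p) ^^ t) a = (p ^^ t) a"
    and "0 < m \<Longrightarrow> ((transpose a b \<circ> p) ^^ m) a = transpose a b ((p ^^ m) a)"
proof -
  show *: "t < m \<Longrightarrow> ((transpose a b \<circ> p) ^^ t) a = (p ^^ t) a" for t
  proof (induction t)
    case (Suc t)
    then have "(p ^^ Suc t) a \<noteq> a" "(p ^^ Suc t) a \<noteq> b" using avoid by blast+
    then show ?case using Suc by simp
  qed simp
  show "0 < m \<Longrightarrow> ((transpose a b \<circ> p) ^^ m) a = transpose a b ((p ^^ m) a)"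
    using *[of "m - 1"] by (cases m) auto
qed

lemma path_prod_swap_tails:
  assumes avoid: "\<forall>s. 0 < s \<and> s < m \<longrightarrow> (p ^^ s) a \<noteq> a \<and> (p ^^ s) a \<noteq> b"
  shows "t \<le> m \<Longrightarrow> path_prod (transpose a b \<circ> p) u a t = path_prod p u a t"
  by (induction t) (simp_all add: funpow_swap_tails(1)[OF avoid])

lemma setcompr_cong:
  assumes "\<And>t. R t \<Longrightarrow> f t = g t" shows "{f t | t. R t} = {g t | t. R t}"
proof (intro set_eqI iffI)
  fix x assume "x \<in> {f t | t. R t}"
  then obtain t where "R t" "x = f t" by blast
  then show "x \<in> {g t | t. R t}" using assms by auto
next
  fix x assume "x \<in> {g t | t. R t}"
  then obtain t where "R t" "x = g t" by blast
  then show "x \<in> {f t | t. R t}" using assms[of t] by (auto intro: exI[of _ t])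
qed

lemma avoid_before_return:
  assumes "permutation p" "b \<notin> orbit p a"
  shows "\<forall>s. 0 < s \<and> s < cycle_length p a \<longrightarrow> (p ^^ s) a \<noteq> a \<and> (p ^^ s) a \<noteq> b"
  using assms cycle_length(3) funpow_in_orbit_self by metis

lemma swap_heads_merge:
  assumes perm: "permutation p" and apart: "e2 \<notin> orbit p e1"
  shows "orbit (p \<circ> transpose e1 e2) e1 = orbit p e1 \<union> orbit p e2"
    and "holonomy (p \<circ> transpose e1 e2) (u \<circ> transpose e1 e2) e1 = holonomy p u e1 * holonomy p u e2"
proof -
  define q where "q = p \<circ> transpose e1 e2"
  define n1 n2 where "n1 = cycle_length p e1" and "n2 = cycle_length p e2"
  have q': "q = p \<circ> transpose e2 e1" by (simp add: q_def transpose_commute)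
  have apart': "e1 \<notin> orbit p e2" using apart orbit_swap permutation_self_in_orbit[OF perm] by metis
  have avoid: "\<forall>s. 0 < s \<and> s < n1 \<longrightarrow> (p ^^ s) e1 \<noteq> e2 \<and> (p ^^ s) e1 \<noteq> e1"
    "\<forall>s. 0 < s \<and> s < n2 \<longrightarrow> (p ^^ s) e2 \<noteq> e1 \<and> (p ^^ s) e2 \<noteq> e2"
    using avoid_before_return[OF perm apart] avoid_before_return[OF perm apart'] by (auto simp: n1_def n2_def)
  have n: "0 < n1" "0 < n2" "(p ^^ n1) e1 = e1" "(p ^^ n2) e2 = e2"
    using cycle_length[OF perm] by (simp_all add: n1_def n2_def)
  have q12: "(q ^^ t) e1 = (p ^^ t) e2" if "0 < t" "t \<le> n2" for t
    using funpow_swap_heads[OF avoid(2)] that by (simp add: q_def)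
  have q21: "(q ^^ t) e2 = (p ^^ t) e1" if "0 < t" "t \<le> n1" for t
    using funpow_swap_heads[OF avoid(1)] that by (simp add: q')
  have r: "(q ^^ n2) e1 = e2" "(q ^^ n1) e2 = e1" using q12 q21 n by simp_all
  have "orbit q e1 = {(q ^^ t) e1 | t. 0 < t \<and> t \<le> n2} \<union> {(q ^^ t) e2 | t. 0 < t \<and> t \<le> n1}"
    using orbit_concat(2)[OF r] n by simp
  also have "\<dots> = {(p ^^ t) e2 | t. 0 < t \<and> t \<le> n2} \<union> {(p ^^ t) e1 | t. 0 < t \<and> t \<le> n1}"
    by (intro arg_cong2[where f = "(\<union>)"] setcompr_cong) (simp_all add: q12 q21)
  finally show "orbit q e1 = orbit p e1 \<union> orbit p e2"
    using orbit_eq_upto[OF n(3,1)] orbit_eq_upto[OF n(4,2)] by (simp add: Un_commute)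
  have "cycle_length q e1 = n2 + n1"
  proof (rule cycle_length_concat[OF r n(2)])
    show "(q ^^ t) e1 \<noteq> e1" if "0 < t" "t \<le> n2" for t
      using q12[OF that] funpow_in_orbit_self[OF perm, of t e2] apart' by auto
  qed (use q21 avoid(1) in simp)
  then show "holonomy q (u \<circ> transpose e1 e2) e1 = holonomy p u e1 * holonomy p u e2"
    using path_prod_add[of q "u \<circ> transpose e1 e2" e1 n2 n1] r(1)
      path_prod_swap_heads[OF avoid(2), of n2 u] path_prod_swap_heads[OF avoid(1), of n1 u]
    by (simp add: q_def n1_def n2_def transpose_commute)
qed

lemma swap_tails_merge:
  assumes perm: "permutation p" and apart: "e2 \<notin> orbit p e1"
  shows "orbit (transpose e1 e2 \<circ> p) e1 = orbit p e1 \<union> orbit p e2"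
    and "holonomy (transpose e1 e2 \<circ> p) u e1 = holonomy p u e2 * holonomy p u e1"
proof -
  define q where "q = transpose e1 e2 \<circ> p"
  define n1 n2 where "n1 = cycle_length p e1" and "n2 = cycle_length p e2"
  have q': "q = transpose e2 e1 \<circ> p" by (simp add: q_def transpose_commute)
  have apart': "e1 \<notin> orbit p e2" using apart orbit_swap permutation_self_in_orbit[OF perm] by metis
  have avoid: "\<forall>s. 0 < s \<and> s < n1 \<longrightarrow> (p ^^ s) e1 \<noteq> e1 \<and> (p ^^ s) e1 \<noteq> e2"
    "\<forall>s. 0 < s \<and> s < n2 \<longrightarrow> (p ^^ s) e2 \<noteq> e2 \<and> (p ^^ s) e2 \<noteq> e1"
    using avoid_before_return[OF perm apart] avoid_before_return[OF perm apart'] by (simp_all add: n1_def n2_def)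
  have n: "0 < n1" "0 < n2" "(p ^^ n1) e1 = e1" "(p ^^ n2) e2 = e2"
    using cycle_length[OF perm] by (simp_all add: n1_def n2_def)
  have q1: "(q ^^ t) e1 = (p ^^ t) e1" if "t < n1" for t
    using funpow_swap_tails(1)[OF avoid(1)] that by (simp add: q_def)
  have q2: "(q ^^ t) e2 = (p ^^ t) e2" if "t < n2" for t
    using funpow_swap_tails(1)[OF avoid(2)] that by (simp add: q')
  have "(q ^^ n1) e1 = e2" using funpow_swap_tails(2)[OF avoid(1)] n unfolding q_def by simp
  moreover have "(q ^^ n2) e2 = e1" using funpow_swap_tails(2)[OF avoid(2)] n unfolding q' by simp
  ultimately have r: "(q ^^ n1) e1 = e2" "(q ^^ n2) e2 = e1" .
  have "orbit q e1 = {(q ^^ t) e1 | t. t < n1} \<union> {(q ^^ t) e2 | t. t < n2}"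
    using orbit_concat(1)[OF r] n by simp
  also have "\<dots> = {(p ^^ t) e1 | t. t < n1} \<union> {(p ^^ t) e2 | t. t < n2}"
    by (intro arg_cong2[where f = "(\<union>)"] setcompr_cong) (simp_all add: q1 q2)
  finally show "orbit q e1 = orbit p e1 \<union> orbit p e2"
    using orbit_eq_cycle_length[OF perm] by (simp add: n1_def n2_def)
  have "cycle_length q e1 = n1 + n2"
  proof (rule cycle_length_concat[OF r n(1)])
    show "(q ^^ t) e1 \<noteq> e1" if "0 < t" "t \<le> n1" for t
      using that q1 avoid(1) r(1) apart' permutation_self_in_orbit[OF perm, of e2]
      by (cases "t = n1") auto
    show "(q ^^ s) e2 \<noteq> e1" if "0 < s" "s < n2" for s
      using q2[OF that(2)] funpow_in_orbit_self[OF perm, of s e2] apart' by auto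
  qed
  moreover have "path_prod q u e1 n1 = path_prod p u e1 n1"
    using path_prod_swap_tails[OF avoid(1)] unfolding q_def by simp
  moreover have "path_prod q u e2 n2 = path_prod p u e2 n2"
    using path_prod_swap_tails[OF avoid(2)] unfolding q' by simp
  ultimately show "holonomy q u e1 = holonomy p u e2 * holonomy p u e1"
    using path_prod_add[of q u e1 n1 n2] r(1) by (simp add: n1_def[symmetric] n2_def[symmetric])
qed

lemma first_hit:
  assumes perm: "permutation p" and "e2 \<in> orbit p e1" "e1 \<noteq> e2"
  obtains j where "0 < j" "(p ^^ j) e1 = e2"
    "\<forall>s. 0 < s \<and> s < j \<longrightarrow> (p ^^ s) e1 \<noteq> e1 \<and> (p ^^ s) e1 \<noteq> e2"
proof
  define j where "j = funpow_dist1 p e1 e2"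
  show "0 < j" "(p ^^ j) e1 = e2" using funpow_dist1_prop[OF assms(2)] by (simp_all add: j_def)
  have not_e2: "(p ^^ s) e1 \<noteq> e2" if "0 < s" "s < j" for s
    using funpow_dist1_least that by (simp add: j_def)
  moreover have "(p ^^ s) e1 \<noteq> e1" if "0 < s" "s < j" for s
  proof
    assume "(p ^^ s) e1 = e1"
    then have "(p ^^ (j mod s)) e1 = e2" using funpow_mod_eq \<open>(p ^^ j) e1 = e2\<close> by metis
    moreover have "j mod s \<noteq> 0" using calculation assms(3) by (metis funpow_0)
    moreover have "j mod s < j" using mod_less_divisor[of s j] that by linarith
    ultimately show False using not_e2 by blast
  qed
  ultimately show "\<forall>s. 0 < s \<and> s < j \<longrightarrow> (p ^^ s) e1 \<noteq> e1 \<and> (p ^^ s) e1 \<noteq> e2" by blast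
qed

lemma swap_heads_split:
  assumes perm: "permutation p" and "e2 \<in> orbit p e1" "e1 \<noteq> e2"
  shows "e2 \<notin> orbit (p \<circ> transpose e1 e2) e1"
proof
  define q where "q = p \<circ> transpose e1 e2"
  obtain j where j: "0 < j" "(p ^^ j) e1 = e2"
    and "\<forall>s. 0 < s \<and> s < j \<longrightarrow> (p ^^ s) e1 \<noteq> e1 \<and> (p ^^ s) e1 \<noteq> e2"
    by (rule first_hit[OF assms])
  then have avoid: "\<forall>s. 0 < s \<and> s < j \<longrightarrow> (p ^^ s) e1 \<noteq> e2 \<and> (p ^^ s) e1 \<noteq> e1" by blast
  have qj: "(q ^^ t) e2 = (p ^^ t) e1" if "0 < t" "t \<le> j" for t
    using funpow_swap_heads[OF avoid] that by (simp add: q_def transpose_commute)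
  have "orbit q e2 = {(q ^^ t) e2 | t. 0 < t \<and> t \<le> j}" using qj j by (intro orbit_eq_upto) simp_all
  also have "\<dots> = {(p ^^ t) e1 | t. 0 < t \<and> t \<le> j}" by (rule setcompr_cong) (simp add: qj)
  finally have "e1 \<notin> orbit q e2" using j avoid assms(3) by (auto simp: le_less)
  moreover have "permutation q" using perm by (simp add: q_def permutation_compose permutation_swap_id)
  moreover assume "e2 \<in> orbit (p \<circ> transpose e1 e2) e1"
  ultimately show False using orbit_swap permutation_self_in_orbit q_def by metis
qed

lemma swap_tails_split:
  assumes perm: "permutation p" and "e2 \<in> orbit p e1" "e1 \<noteq> e2"
  shows "e2 \<notin> orbit (transpose e1 e2 \<circ> p) e1"
proof -
  obtain j where j: "0 < j" "(p ^^ j) e1 = e2"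
    and avoid: "\<forall>s. 0 < s \<and> s < j \<longrightarrow> (p ^^ s) e1 \<noteq> e1 \<and> (p ^^ s) e1 \<noteq> e2"
    by (rule first_hit[OF assms])
  have "((transpose e1 e2 \<circ> p) ^^ j) e1 = e1" using funpow_swap_tails(2)[OF avoid] j by simp
  then have "orbit (transpose e1 e2 \<circ> p) e1 = {((transpose e1 e2 \<circ> p) ^^ t) e1 | t. t < j}"
    by (rule orbit_altdef_bounded[OF _ j(1)])
  also have "\<dots> = {(p ^^ t) e1 | t. t < j}" by (rule setcompr_cong) (rule funpow_swap_tails(1)[OF avoid])
  finally show ?thesis
  proof (clarsimp)
    fix t assume "e2 = (p ^^ t) e1" "t < j"
    then show False using avoid assms(3) by (cases "t = 0") auto
  qed
qed

lemma conj_system_swap_heads: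
  assumes sys: "conj_system A p u \<chi>" and e: "e1 \<in> A" "e2 \<in> A" and lab: "\<chi> e1 = \<chi> e2"
  shows "conj_system A (p \<circ> transpose e1 e2) (u \<circ> transpose e1 e2) \<chi>"
proof -
  have "\<chi> (transpose e1 e2 a) = \<chi> a" for a using lab by (simp add: transpose_def)
  moreover have "transpose e1 e2 a \<in> A" if "a \<in> A" for a using e that by (simp add: transpose_def)
  moreover have "p \<circ> transpose e1 e2 permutes A"
    using sys e by (simp add: conj_system_def permutes_compose permutes_swap_id)
  ultimately show ?thesis using sys unfolding conj_system_def by (metis comp_apply)
qed

lemma conj_system_swap_tails:
  assumes sys: "conj_system A p u \<chi>" and e: "e1 \<in> A" "e2 \<in> A" and lab: "\<chi> e1 = \<chi> e2"
  shows "conj_system A (transpose e1 e2 \<circ> p) u \<chi>"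
proof -
  have "\<chi> (transpose e1 e2 a) = \<chi> a" for a using lab by (simp add: transpose_def)
  moreover have "transpose e1 e2 \<circ> p permutes A"
    using sys e by (simp add: conj_system_def permutes_compose permutes_swap_id)
  ultimately show ?thesis using sys unfolding conj_system_def by simp
qed

text \<open>A reconnection either merges two cycles or splits one.  Since reconnecting twice at the same
  pair is the identity, the splitting case is the merging case read backwards.\<close>

lemma exponent_sum_swap_heads_apart:
  assumes sys: "conj_system A p u \<chi>" and P: "cyclic_class P N" and e: "e1 \<in> A" "e2 \<in> A"
    and lab: "\<chi> e1 = \<chi> e2" and apart: "e2 \<notin> orbit p e1"
  shows "exponent_sum P N A (p \<circ> transpose e1 e2) (u \<circ> transpose e1 e2) \<chi> = exponent_sum P N A p u \<chi>"
proof (rule exponent_sum_merge[OF sys conj_system_swap_heads[OF sys e lab] P e apart lab])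
  have "e1 \<in> orbit p e1" "e2 \<in> orbit p e2"
    using permutation_self_in_orbit[OF conj_system_permutation[OF sys]] by blast+
  then show "\<forall>y\<in>A. y \<notin> orbit p e1 \<union> orbit p e2 \<longrightarrow>
      (p \<circ> transpose e1 e2) y = p y \<and> (u \<circ> transpose e1 e2) y = u y"
    by (auto simp: transpose_def)
qed (use swap_heads_merge[OF conj_system_permutation[OF sys] apart] in auto)

theorem exponent_sum_swap_heads:
  assumes sys: "conj_system A p u \<chi>" and P: "cyclic_class P N" and e: "e1 \<in> A" "e2 \<in> A"
    and lab: "\<chi> e1 = \<chi> e2"
  shows "exponent_sum P N A (p \<circ> transpose e1 e2) (u \<circ> transpose e1 e2) \<chi> = exponent_sum P N A p u \<chi>"
proof (cases "e1 = e2 \<or> e2 \<notin> orbit p e1")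
  case True
  then show ?thesis using exponent_sum_swap_heads_apart[OF sys P e lab] by auto
next
  case False
  then have "e2 \<notin> orbit (p \<circ> transpose e1 e2) e1"
    using swap_heads_split[OF conj_system_permutation[OF sys]] by blast
  from exponent_sum_swap_heads_apart[OF conj_system_swap_heads[OF sys e lab] P e lab this]
  show ?thesis by (simp add: comp_assoc)
qed

lemma exponent_sum_swap_tails_apart:
  assumes sys: "conj_system A p u \<chi>" and P: "cyclic_class P N" and e: "e1 \<in> A" "e2 \<in> A"
    and lab: "\<chi> e1 = \<chi> e2" and apart: "e2 \<notin> orbit p e1"
  shows "exponent_sum P N A (transpose e1 e2 \<circ> p) u \<chi> = exponent_sum P N A p u \<chi>"
proof (rule exponent_sum_merge[OF sys conj_system_swap_tails[OF sys e lab] P e apart lab])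
  have perm: "permutation p" using sys by (rule conj_system_permutation)
  show "\<forall>y\<in>A. y \<notin> orbit p e1 \<union> orbit p e2 \<longrightarrow> (transpose e1 e2 \<circ> p) y = p y \<and> u y = u y"
  proof (intro ballI impI)
    fix y assume y: "y \<notin> orbit p e1 \<union> orbit p e2"
    have "p y \<in> orbit p y" using funpow_in_orbit_self[OF perm, of 1 y] by simp
    then have "p y \<noteq> e1" "p y \<noteq> e2"
      using orbit_mem_trans[OF perm] permutation_self_in_orbit[OF perm] y by blast+
    then show "(transpose e1 e2 \<circ> p) y = p y \<and> u y = u y" by simp
  qed
qed (use swap_tails_merge[OF conj_system_permutation[OF sys] apart] in auto)

theorem exponent_sum_swap_tails:
  assumes sys: "conj_system A p u \<chi>" and P: "cyclic_class P N" and e: "e1 \<in> A" "e2 \<in> A"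
    and lab: "\<chi> e1 = \<chi> e2"
  shows "exponent_sum P N A (transpose e1 e2 \<circ> p) u \<chi> = exponent_sum P N A p u \<chi>"
proof (cases "e1 = e2 \<or> e2 \<notin> orbit p e1")
  case True
  then show ?thesis using exponent_sum_swap_tails_apart[OF sys P e lab] by auto
next
  case False
  then have "e2 \<notin> orbit (transpose e1 e2 \<circ> p) e1"
    using swap_tails_split[OF conj_system_permutation[OF sys]] by blast
  from exponent_sum_swap_tails_apart[OF conj_system_swap_tails[OF sys e lab] P e lab this]
  show ?thesis by (simp add: comp_assoc[symmetric])
qed

section \<open>Diagrams\<close>

definition is_head :: "diagram \<Rightarrow> nat \<times> nat \<Rightarrow> bool" where
  "is_head D s \<longleftrightarrow> s \<in> ehead D ` Es D"

definition opposite :: "nat \<times> nat \<Rightarrow> nat \<times> nat" where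
  "opposite s = (fst s, (snd s + 2) mod 4)"

lemma wf_edge_end_bij: "wf_pd D \<Longrightarrow> bij_betw (edge_end D) (Es D \<times> UNIV) (slots D)"
  by (simp add: wf_pd_def)

lemma ehead_in_slots: "wf_pd D \<Longrightarrow> e \<in> Es D \<Longrightarrow> ehead D e \<in> slots D"
  using bij_betw_apply[OF wf_edge_end_bij, of D "(e, True)"] by (simp add: edge_end_def)

lemma ehead_crossing: "wf_pd D \<Longrightarrow> e \<in> Es D \<Longrightarrow> fst (ehead D e) \<in> Xs D \<and> snd (ehead D e) < 4"
  using ehead_in_slots[of D e] by (auto simp: slots_def)

lemma edge_end_inj:
  "wf_pd D \<Longrightarrow> x \<in> Es D \<times> UNIV \<Longrightarrow> y \<in> Es D \<times> UNIV \<Longrightarrow> edge_end D x = edge_end D y \<Longrightarrow> x = y"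
  using wf_edge_end_bij[of D] unfolding bij_betw_def inj_on_def by blast

lemma ehead_inj: "wf_pd D \<Longrightarrow> e \<in> Es D \<Longrightarrow> e' \<in> Es D \<Longrightarrow> ehead D e = ehead D e' \<Longrightarrow> e = e'"
  using edge_end_inj[of D "(e,True)" "(e',True)"] by (simp add: edge_end_def)

lemma etail_inj: "wf_pd D \<Longrightarrow> e \<in> Es D \<Longrightarrow> e' \<in> Es D \<Longrightarrow> etail D e = etail D e' \<Longrightarrow> e = e'"
  using edge_end_inj[of D "(e,False)" "(e',False)"] by (simp add: edge_end_def)

lemma ehead_neq_etail: "wf_pd D \<Longrightarrow> e \<in> Es D \<Longrightarrow> e' \<in> Es D \<Longrightarrow> ehead D e \<noteq> etail D e'"
  using edge_end_inj[of D "(e,True)" "(e',False)"] by (auto simp: edge_end_def)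

lemma slot_covered: assumes "wf_pd D" "s \<in> slots D" shows "\<exists>e\<in>Es D. ehead D e = s \<or> etail D e = s"
proof -
  have "s \<in> edge_end D ` (Es D \<times> UNIV)" using wf_edge_end_bij[OF assms(1)] assms(2) by (simp add: bij_betw_def)
  then obtain e b where "e \<in> Es D" "edge_end D (e,b) = s" by auto
  then show ?thesis by (cases b) (auto simp: edge_end_def)
qed

lemma edge_at_unique:
  assumes "t \<in> Es D" "ehead D t = s \<or> etail D t = s"
    and "\<And>e. e \<in> Es D \<Longrightarrow> ehead D e = s \<or> etail D e = s \<Longrightarrow> e = t"
  shows "edge_at D s = t"
  unfolding edge_at_def using assms by (intro the_equality) blast+

lemma edge_at_eq: assumes "wf_pd D" "e \<in> Es D" "ehead D e = s \<or> etail D e = s" shows "edge_at D s = e"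
proof (rule edge_at_unique[OF assms(2,3)])
  fix e' assume "e' \<in> Es D" "ehead D e' = s \<or> etail D e' = s"
  moreover have "ehead D e \<noteq> etail D e'" "ehead D e' \<noteq> etail D e"
    using ehead_neq_etail[OF assms(1)] assms(2) \<open>e' \<in> Es D\<close> by blast+
  ultimately show "e' = e"
    using assms(3) ehead_inj[OF assms(1) _ assms(2)] etail_inj[OF assms(1) _ assms(2)] by auto
qed

lemma edge_at_ehead: "wf_pd D \<Longrightarrow> e \<in> Es D \<Longrightarrow> edge_at D (ehead D e) = e"
  by (rule edge_at_eq) auto

lemma edge_at_in_Es: assumes "wf_pd D" "s \<in> slots D"
  shows "edge_at D s \<in> Es D" "ehead D (edge_at D s) = s \<or> etail D (edge_at D s) = s"
proof -
  obtain e where e: "e \<in> Es D" "ehead D e = s \<or> etail D e = s" using slot_covered[OF assms] by blast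
  then have "edge_at D s = e" by (rule edge_at_eq[OF assms(1)])
  then show "edge_at D s \<in> Es D" "ehead D (edge_at D s) = s \<or> etail D (edge_at D s) = s" using e by auto
qed

lemma is_head_iff: assumes "wf_pd D" "s \<in> slots D"
  shows "is_head D s \<longleftrightarrow> ehead D (edge_at D s) = s"
proof
  assume "is_head D s"
  then obtain e where e: "e \<in> Es D" "ehead D e = s" unfolding is_head_def by blast
  then have "edge_at D s = e" using edge_at_eq[OF assms(1)] by blast
  then show "ehead D (edge_at D s) = s" using e by simp
next
  assume "ehead D (edge_at D s) = s"
  then show "is_head D s" using edge_at_in_Es[OF assms] unfolding is_head_def by force
qed

lemma not_is_head_iff: assumes "wf_pd D" "s \<in> slots D"
  shows "\<not> is_head D s \<longleftrightarrow> etail D (edge_at D s) = s"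
  using is_head_iff[OF assms] edge_at_in_Es[OF assms] ehead_neq_etail[OF assms(1)] by metis

lemma not_is_head_iff_tail: assumes "wf_pd D" "s \<in> slots D"
  shows "\<not> is_head D s \<longleftrightarrow> s \<in> etail D ` Es D"
proof
  assume "\<not> is_head D s"
  then show "s \<in> etail D ` Es D" using slot_covered[OF assms] unfolding is_head_def by blast
next
  assume "s \<in> etail D ` Es D"
  then show "\<not> is_head D s" using ehead_neq_etail[OF assms(1)] unfolding is_head_def by blast
qed

lemma crossing_heads: assumes "wf_pd D" "c \<in> Xs D"
  shows "is_head D (c,0) \<longleftrightarrow> \<not> is_head D (c,2)" "is_head D (c,1) \<longleftrightarrow> \<not> is_head D (c,3)"
proof -
  have "(c,k) \<in> slots D" if "k < 4" for k using assms(2) that by (simp add: slots_def)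
  then show "is_head D (c,0) \<longleftrightarrow> \<not> is_head D (c,2)" "is_head D (c,1) \<longleftrightarrow> \<not> is_head D (c,3)"
    using assms not_is_head_iff_tail[OF assms(1)] unfolding wf_pd_def is_head_def by simp_all
qed

lemma is_head_opposite: assumes "wf_pd D" "s \<in> slots D" shows "is_head D (opposite s) \<longleftrightarrow> \<not> is_head D s"
proof -
  obtain c k where s: "s = (c,k)" "c \<in> Xs D" "k < 4" using assms(2) by (auto simp: slots_def)
  have o: "opposite (c,0) = (c,2)" "opposite (c,1) = (c,3)" "opposite (c,2) = (c,0)" "opposite (c,3) = (c,1)"
    by (simp_all add: opposite_def)
  have "k = 0 \<or> k = 1 \<or> k = 2 \<or> k = 3" using s by auto
  then show ?thesis using crossing_heads[OF assms(1) s(2)] o s(1) by auto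
qed

lemma opposite_in_slots: "s \<in> slots D \<Longrightarrow> opposite s \<in> slots D"
  by (auto simp: opposite_def slots_def)

lemma opposite_opposite: assumes "s \<in> slots D" shows "opposite (opposite s) = s"
proof -
  obtain c k where s: "s = (c,k)" "k < 4" using assms by (auto simp: slots_def)
  then have "k = 0 \<or> k = 1 \<or> k = 2 \<or> k = 3" by auto
  then show ?thesis using s by (auto simp: opposite_def)
qed

lemma esucc_eq: "e \<in> Es D \<Longrightarrow> esucc D e = edge_at D (opposite (ehead D e))"
  by (simp add: esucc_def opposite_def)

lemma esucc_in_Es: assumes "wf_pd D" "e \<in> Es D"
  shows "esucc D e \<in> Es D" and "etail D (esucc D e) = opposite (ehead D e)"
proof -
  have s: "opposite (ehead D e) \<in> slots D" using opposite_in_slots ehead_in_slots assms by blast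
  have "\<not> is_head D (opposite (ehead D e))"
    using is_head_opposite[OF assms(1) ehead_in_slots[OF assms]] assms(2) by (auto simp: is_head_def)
  then show "esucc D e \<in> Es D" "etail D (esucc D e) = opposite (ehead D e)"
    using edge_at_in_Es(1)[OF assms(1) s] not_is_head_iff[OF assms(1) s] esucc_eq[OF assms(2)] by simp_all
qed

lemma esucc_permutes: assumes "wf_pd D" shows "esucc D permutes (Es D \<union> Fs D)"
proof (rule bij_imp_permutes)
  have dj: "Es D \<inter> Fs D = {}" and fin: "finite (Es D \<union> Fs D)" using assms by (auto simp: wf_pd_def)
  have into: "esucc D ` (Es D \<union> Fs D) \<subseteq> Es D \<union> Fs D"
    using esucc_in_Es(1)[OF assms] by (auto simp: esucc_def)
  have "inj_on (esucc D) (Es D \<union> Fs D)"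
  proof (rule inj_onI)
    fix x y assume xy: "x \<in> Es D \<union> Fs D" "y \<in> Es D \<union> Fs D" "esucc D x = esucc D y"
    show "x = y"
    proof (cases "x \<in> Es D \<and> y \<in> Es D")
      case True
      then have "opposite (ehead D x) = opposite (ehead D y)" using esucc_in_Es(2)[OF assms] xy(3) by metis
      then have "ehead D x = ehead D y" using opposite_opposite ehead_in_slots[OF assms] True by metis
      then show ?thesis using ehead_inj[OF assms] True by blast
    next
      case False
      then show ?thesis using xy dj esucc_in_Es(1)[OF assms] by (auto simp: esucc_def split: if_splits)
    qed
  qed
  then show "bij_betw (esucc D) (Es D \<union> Fs D) (Es D \<union> Fs D)"
    using endo_inj_surj[OF fin into] by (simp add: bij_betw_def)
  show "\<And>x. x \<notin> Es D \<union> Fs D \<Longrightarrow> esucc D x = x" by (simp add: esucc_def)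
qed

lemma csign_cases: "csign D c = 1 \<or> csign D c = -1"
  by (simp add: csign_def)

lemma uin_cases: "uin D c = 0 \<or> uin D c = 2"
  by (simp add: uin_def)

lemma oin_cases: "oin D c = 1 \<or> oin D c = 3"
  by (simp add: oin_def)

lemma colored_Tstar: "colored D \<Longrightarrow> e \<in> Es D \<union> Fs D \<Longrightarrow> elab D e \<in> Tstar"
  by (simp add: colored_def)

lemma overlab_Tstar: assumes "wf_pd D" "colored D" "c \<in> Xs D" shows "overlab D c \<in> Tstar"
  using edge_at_in_Es(1)[OF assms(1), of "(c,1)"] assms colored_Tstar by (simp add: overlab_def slots_def)

lemma ufactor_eq: "ufactor D e = (if e \<in> Es D \<and> snd (ehead D e) \<in> {0,2} \<and> overlab D (fst (ehead D e)) \<noteq> -1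
     then overlab D (fst (ehead D e)) powi csign D (fst (ehead D e)) else 1)"
  by (simp only: ufactor_def Let_def qzpow_eq_power_int qone_eq_one qneg_eq_uminus)

lemma ufactor_Tstar: assumes "wf_pd D" "colored D" shows "ufactor D e \<in> Tstar"
proof (cases "e \<in> Es D")
  case True
  define c where "c = fst (ehead D e)"
  have "overlab D c \<in> Tstar" using overlab_Tstar[OF assms] ehead_crossing[OF assms(1) True] by (simp add: c_def)
  then have "overlab D c powi csign D c \<in> Tstar" using csign_cases[of D c] Tstar_inverse by auto
  then show ?thesis using Tstar_one by (simp add: ufactor_eq c_def)
qed (simp add: ufactor_eq Tstar_one)

lemma wirtinger_step:
  assumes wf: "wf_pd D" and col: "colored D" and e: "e \<in> Es D"
  shows "elab D (esucc D e) = ufactor D e * elab D e * inverse (ufactor D e)"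
proof -
  obtain c k where hk: "ehead D e = (c,k)" by (cases "ehead D e")
  have c: "c \<in> Xs D" and k: "k < 4" using ehead_crossing[OF wf e] hk by auto
  have es: "esucc D e = edge_at D (c, (k+2) mod 4)" using e hk by (simp add: esucc_def)
  have ee: "edge_at D (c,k) = e" using edge_at_ehead[OF wf e] hk by simp
  have head: "is_head D (c,k)" using e hk unfolding is_head_def by force
  show ?thesis
  proof (cases "k = 0 \<or> k = 2")
    case True
    then have "uin D c = k"
      using head crossing_heads(1)[OF wf c] by (auto simp: uin_def is_head_def[symmetric])
    then have "in_under D c = e" "out_under D c = esucc D e"
      using ee es by (simp_all add: in_under_def out_under_def)
    moreover have "elab D (out_under D c) = overlab D c powi csign D c * elab D (in_under D c)
        * overlab D c powi (- csign D c)"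
      using col c unfolding colored_def by (simp add: qmul_eq_times qzpow_eq_power_int)
    moreover have "(-1::quat) powi csign D c = -1" "(-1::quat) powi (- csign D c) = -1"
      using csign_cases[of D c] by auto
    ultimately show ?thesis
      using e hk True by (auto simp: ufactor_eq power_int_minus)
  next
    case False
    then have "k = 1 \<or> k = 3" using k by auto
    moreover have "elab D (edge_at D (c,1)) = elab D (edge_at D (c,3))" using col c unfolding colored_def by blast
    ultimately have "elab D (esucc D e) = elab D e" using es ee by auto
    then show ?thesis using hk False by (simp add: ufactor_eq)
  qed
qed

lemma conj_system_diagram:
  assumes wf: "wf_pd D" and col: "colored D"
  shows "conj_system (Es D \<union> Fs D) (esucc D) (ufactor D) (elab D)"
  unfolding conj_system_def
proof (intro conjI ballI)
  show "finite (Es D \<union> Fs D)" using wf by (simp add: wf_pd_def)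
  show "esucc D permutes Es D \<union> Fs D" using wf by (rule esucc_permutes)
  fix a assume a: "a \<in> Es D \<union> Fs D"
  show "ufactor D a \<in> Tstar" using wf col by (rule ufactor_Tstar)
  show "elab D a \<in> Tstar" using col a by (rule colored_Tstar)
  show "elab D (esucc D a) = ufactor D a * elab D a * inverse (ufactor D a)"
    using wirtinger_step[OF wf col] by (cases "a \<in> Es D") (simp_all add: esucc_def ufactor_eq)
qed

definition diagram_exponent_sum :: "(quat \<Rightarrow> bool) \<Rightarrow> int \<Rightarrow> diagram \<Rightarrow> int" where
  "diagram_exponent_sum P N D = exponent_sum P N (Es D \<union> Fs D) (esucc D) (ufactor D) (elab D)"

lemma sum_Qprime_eq_exponent_sum:
  assumes "wf_pd D"
  shows "(\<Sum>L\<in>{L\<in>components D. \<forall>e\<in>L. P (elab D e)}. Qprime D L) mod N = diagram_exponent_sum P N D"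
proof -
  have "permutation (esucc D)"
    using esucc_permutes[OF assms] assms by (auto simp: permutation_permutes wf_pd_def)
  have "components D = (\<lambda>e. {(esucc D ^^ n) e | n. True}) ` (Es D \<union> Fs D)"
    unfolding components_def by blast
  also have "\<dots> = orbit (esucc D) ` (Es D \<union> Fs D)"
    by (simp add: orbit_altdef_permutation[OF \<open>permutation (esucc D)\<close>])
  finally have "components D = orbit (esucc D) ` (Es D \<union> Fs D)" .
  moreover have "qprod D b t = path_prod (esucc D) (ufactor D) b t" for b t
    by (induction t) (simp_all add: qone_eq_one qmul_eq_times)
  ultimately show ?thesis
    unfolding diagram_exponent_sum_def exponent_sum_def Qprime_def qLb_def orbit_exponent_def
      period_def cycle_length_def qzpow_eq_power_int by simp
qed

lemma Qb_oriented_eq: "wf_pd D \<Longrightarrow>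
    Qb_oriented D = (diagram_exponent_sum is_black 6 D - omega_b D - 4 * l_bg D) mod 6"
  unfolding Qb_oriented_def black_comp_def sum_Qprime_eq_exponent_sum[symmetric]
  by (simp add: mod_diff_left_eq diff_diff_eq)

lemma Qc_eq: "wf_pd D \<Longrightarrow> Qc D = (diagram_exponent_sum is_Q8loop 4 D - omega_c D) mod 4"
  unfolding Qc_def Q8_comp_def sum_Qprime_eq_exponent_sum[symmetric]
  by (simp add: mod_diff_left_eq)

definition crossing_sums :: "diagram \<Rightarrow> int \<times> int \<times> int" where
  "crossing_sums D = (omega_b D, l_bg D, omega_c D)"

lemma crossing_sums_cong:
  assumes X: "Xs D' = Xs D" and H: "ehead D' ` Es D' = ehead D ` Es D"
    and L: "\<And>c k. c \<in> Xs D \<Longrightarrow> k < 4 \<Longrightarrow> elab D' (edge_at D' (c,k)) = elab D (edge_at D (c,k))"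
  shows "crossing_sums D' = crossing_sums D"
proof -
  have "uin D' = uin D" "csign D' = csign D" using H by (simp_all add: fun_eq_iff uin_def oin_def csign_def)
  moreover have "overlab D' c = overlab D c" "elab D' (in_under D' c) = elab D (in_under D c)" if "c \<in> Xs D" for c
    using L that uin_cases[of D c] calculation by (auto simp: overlab_def in_under_def)
  ultimately show ?thesis
    unfolding crossing_sums_def omega_b_def l_bg_def omega_c_def X by (auto intro!: sum.cong)
qed

lemma edge_at_reattach:
  assumes wf: "wf_pd D" and E: "Es D' = Es D"
    and \<sigma>: "\<sigma> permutes Es D" "\<And>x. \<sigma> (\<sigma> x) = x" and \<tau>: "\<tau> permutes Es D" "\<And>x. \<tau> (\<tau> x) = x"
    and heads: "\<And>e. e \<in> Es D \<Longrightarrow> ehead D' e = ehead D (\<sigma> e)"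
    and tails: "\<And>e. e \<in> Es D \<Longrightarrow> etail D' e = etail D (\<tau> e)"
    and s: "s \<in> slots D"
  shows "edge_at D' s = (if is_head D s then \<sigma> (edge_at D s) else \<tau> (edge_at D s))"
proof (cases "is_head D s")
  case True
  then have t: "edge_at D s \<in> Es D" "ehead D (edge_at D s) = s"
    using edge_at_in_Es(1)[OF wf s] is_head_iff[OF wf s] by auto
  have "edge_at D' s = \<sigma> (edge_at D s)"
  proof (rule edge_at_unique)
    show "\<sigma> (edge_at D s) \<in> Es D'" using t(1) \<sigma>(1) E by (simp add: permutes_in_image)
    then show "ehead D' (\<sigma> (edge_at D s)) = s \<or> etail D' (\<sigma> (edge_at D s)) = s"
      using heads \<sigma>(2) t(2) E by simp
    fix e assume e: "e \<in> Es D'" "ehead D' e = s \<or> etail D' e = s"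
    have "\<sigma> e \<in> Es D" "\<tau> e \<in> Es D" using e(1) E \<sigma>(1) \<tau>(1) by (simp_all add: permutes_in_image)
    then have "ehead D (\<sigma> e) = s" using e heads tails E ehead_neq_etail[OF wf t(1)] t(2) by force
    then show "e = \<sigma> (edge_at D s)"
      using ehead_inj[OF wf \<open>\<sigma> e \<in> Es D\<close> t(1)] t(2) \<sigma>(2) by metis
  qed
  then show ?thesis using True by simp
next
  case False
  then have t: "edge_at D s \<in> Es D" "etail D (edge_at D s) = s"
    using edge_at_in_Es(1)[OF wf s] not_is_head_iff[OF wf s] by auto
  have "edge_at D' s = \<tau> (edge_at D s)"
  proof (rule edge_at_unique)
    show "\<tau> (edge_at D s) \<in> Es D'" using t(1) \<tau>(1) E by (simp add: permutes_in_image)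
    then show "ehead D' (\<tau> (edge_at D s)) = s \<or> etail D' (\<tau> (edge_at D s)) = s"
      using tails \<tau>(2) t(2) E by simp
    fix e assume e: "e \<in> Es D'" "ehead D' e = s \<or> etail D' e = s"
    have "\<sigma> e \<in> Es D" "\<tau> e \<in> Es D" using e(1) E \<sigma>(1) \<tau>(1) by (simp_all add: permutes_in_image)
    then have "etail D (\<tau> e) = s" using e heads tails E ehead_neq_etail[OF wf _ t(1)] t(2) by force
    then show "e = \<tau> (edge_at D s)"
      using etail_inj[OF wf \<open>\<tau> e \<in> Es D\<close> t(1)] t(2) \<tau>(2) by metis
  qed
  then show ?thesis using False by simp
qed

lemma reattach:
  assumes wf: "wf_pd D" and X: "Xs D' = Xs D" and E: "Es D' = Es D"
    and \<sigma>: "\<sigma> permutes Es D" "\<And>x. \<sigma> (\<sigma> x) = x" and \<tau>: "\<tau> permutes Es D" "\<And>x. \<tau> (\<tau> x) = x"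
    and heads: "\<And>e. e \<in> Es D \<Longrightarrow> ehead D' e = ehead D (\<sigma> e)"
    and tails: "\<And>e. e \<in> Es D \<Longrightarrow> etail D' e = etail D (\<tau> e)"
    and labs: "\<And>e. e \<in> Es D \<Longrightarrow> elab D' e = elab D e \<and> elab D (\<sigma> e) = elab D e \<and> elab D (\<tau> e) = elab D e"
  shows "esucc D' = \<tau> \<circ> esucc D \<circ> \<sigma>" "ufactor D' = ufactor D \<circ> \<sigma>" "crossing_sums D' = crossing_sums D"
proof -
  note edge_at' = edge_at_reattach[OF wf E \<sigma> \<tau> heads tails]
  have "ehead D' ` Es D' = (\<lambda>e. ehead D (\<sigma> e)) ` Es D" by (rule image_cong) (simp_all add: E heads)
  also have "\<dots> = ehead D ` Es D" by (metis image_image permutes_image[OF \<sigma>(1)])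
  finally have H: "ehead D' ` Es D' = ehead D ` Es D" .
  then have is_head': "is_head D' = is_head D" "csign D' = csign D"
    by (simp_all add: fun_eq_iff is_head_def csign_def uin_def oin_def)
  have lab: "elab D' (edge_at D' s) = elab D (edge_at D s)" if "s \<in> slots D" for s
    using edge_at' that labs edge_at_in_Es(1)[OF wf that] \<sigma>(1) \<tau>(1) by (auto simp: permutes_in_image)
  then show "crossing_sums D' = crossing_sums D"
    using crossing_sums_cong[OF X H] by (simp add: slots_def)
  have fix_out: "\<sigma> x = x" "\<tau> x = x" if "x \<notin> Es D" for x
    using that \<sigma>(1) \<tau>(1) by (simp_all add: permutes_not_in)
  show "esucc D' = \<tau> \<circ> esucc D \<circ> \<sigma>"
  proof
    fix x show "esucc D' x = (\<tau> \<circ> esucc D \<circ> \<sigma>) x"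
    proof (cases "x \<in> Es D")
      case True
      then have x: "\<sigma> x \<in> Es D" using \<sigma>(1) by (simp add: permutes_in_image)
      have "\<not> is_head D (opposite (ehead D (\<sigma> x)))"
        using is_head_opposite[OF wf ehead_in_slots[OF wf x]] x by (auto simp: is_head_def)
      then show ?thesis
        using True E x edge_at' opposite_in_slots[OF ehead_in_slots[OF wf x]]
        by (simp add: esucc_eq heads)
    qed (use E fix_out in \<open>simp add: esucc_def\<close>)
  qed
  show "ufactor D' = ufactor D \<circ> \<sigma>"
  proof
    fix x show "ufactor D' x = (ufactor D \<circ> \<sigma>) x"
    proof (cases "x \<in> Es D")
      case True
      then have x: "\<sigma> x \<in> Es D" using \<sigma>(1) by (simp add: permutes_in_image)
      have "overlab D' (fst (ehead D (\<sigma> x))) = overlab D (fst (ehead D (\<sigma> x)))"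
        using lab ehead_crossing[OF wf x] by (simp add: overlab_def slots_def)
      then show ?thesis using True x E is_head' by (simp add: ufactor_eq heads)
    qed (use E fix_out in \<open>simp add: ufactor_eq\<close>)
  qed
qed

lemma reattach_id:
  assumes wf: "wf_pd D" and "Xs D' = Xs D" "Es D' = Es D"
    and "\<And>e. e \<in> Es D \<Longrightarrow> ehead D' e = ehead D e \<and> etail D' e = etail D e \<and> elab D' e = elab D e"
  shows "esucc D' = esucc D" "ufactor D' = ufactor D" "crossing_sums D' = crossing_sums D"
proof -
  have "\<And>x. id (id x) = x" "\<And>e. e \<in> Es D \<Longrightarrow> ehead D' e = ehead D (id e)"
    "\<And>e. e \<in> Es D \<Longrightarrow> etail D' e = etail D (id e)"
    "\<And>e. e \<in> Es D \<Longrightarrow> elab D' e = elab D e \<and> elab D (id e) = elab D e \<and> elab D (id e) = elab D e"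
    using assms(4) by simp_all
  from reattach[OF wf assms(2,3) permutes_id this(1) permutes_id this(1) this(2-4)]
  show "esucc D' = esucc D" "ufactor D' = ufactor D" "crossing_sums D' = crossing_sums D"
    by (simp_all add: o_def)
qed

lemma image_reattach:
  assumes "\<sigma> permutes A" "\<And>e. e \<in> A \<Longrightarrow> f' e = f (\<sigma> e)" shows "f' ` A = f ` A"
proof -
  have "f' ` A = (\<lambda>e. f (\<sigma> e)) ` A" using assms(2) by (rule image_cong[OF refl])
  also have "\<dots> = f ` A" by (metis image_image permutes_image[OF assms(1)])
  finally show ?thesis .
qed

lemma wf_reattach:
  assumes wf: "wf_pd D" and X: "Xs D' = Xs D" and E: "Es D' = Es D"
    and F: "finite (Fs D')" "Es D \<inter> Fs D' = {}" and \<sigma>: "\<sigma> permutes Es D" and \<tau>: "\<tau> permutes Es D"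
    and heads: "\<And>e. e \<in> Es D \<Longrightarrow> ehead D' e = ehead D (\<sigma> e)"
    and tails: "\<And>e. e \<in> Es D \<Longrightarrow> etail D' e = etail D (\<tau> e)"
  shows "wf_pd D'"
proof -
  define \<phi> where "\<phi> = (\<lambda>(e, b). (if b then \<sigma> e else \<tau> e, b))"
  have inv: "inv \<sigma> (\<sigma> e) = e" "\<sigma> (inv \<sigma> e) = e" "inv \<tau> (\<tau> e) = e" "\<tau> (inv \<tau> e) = e" for e
    by (simp_all add: permutes_inverses[OF \<sigma>] permutes_inverses[OF \<tau>])
  have mem: "\<sigma> e \<in> Es D \<longleftrightarrow> e \<in> Es D" "\<tau> e \<in> Es D \<longleftrightarrow> e \<in> Es D"
    "inv \<sigma> e \<in> Es D \<longleftrightarrow> e \<in> Es D" "inv \<tau> e \<in> Es D \<longleftrightarrow> e \<in> Es D" for e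
    by (simp_all add: permutes_in_image \<sigma> \<tau> permutes_inv)
  have "bij_betw \<phi> (Es D \<times> UNIV) (Es D \<times> UNIV)"
    by (rule bij_betw_byWitness[where f' = "\<lambda>(e, b). (if b then inv \<sigma> e else inv \<tau> e, b)"])
      (auto simp: \<phi>_def inv mem)
  then have "bij_betw (edge_end D \<circ> \<phi>) (Es D \<times> UNIV) (slots D)"
    using wf_edge_end_bij[OF wf] by (rule bij_betw_trans)
  moreover have "edge_end D' x = (edge_end D \<circ> \<phi>) x" if "x \<in> Es D \<times> UNIV" for x
    using that heads tails by (auto simp: edge_end_def \<phi>_def)
  ultimately have "bij_betw (edge_end D') (Es D' \<times> UNIV) (slots D')"
    using bij_betw_cong[of "Es D \<times> UNIV" "edge_end D'" "edge_end D \<circ> \<phi>"] E X by (simp add: slots_def)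
  moreover have "ehead D' ` Es D' = ehead D ` Es D" "etail D' ` Es D' = etail D ` Es D"
    using image_reattach[where f' = "ehead D'" and f = "ehead D", OF \<sigma> heads]
      image_reattach[where f' = "etail D'" and f = "etail D", OF \<tau> tails] E by simp_all
  ultimately show ?thesis using wf X E F by (simp add: wf_pd_def)
qed

text \<open>Everything the invariants read.\<close>

definition same_data :: "diagram \<Rightarrow> diagram \<Rightarrow> bool" where
  "same_data D D' \<longleftrightarrow> Xs D' = Xs D \<and> Es D' = Es D \<and> Fs D' = Fs D
     \<and> (\<forall>e\<in>Es D. ehead D' e = ehead D e \<and> etail D' e = etail D e) \<and> (\<forall>e\<in>Es D \<union> Fs D. elab D' e = elab D e)"

lemma same_data_invariants:
  assumes wf: "wf_pd D" and same: "same_data D D'"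
  shows "wf_pd D'" "diagram_exponent_sum P N D' = diagram_exponent_sum P N D"
    "crossing_sums D' = crossing_sums D"
proof -
  have *: "Xs D' = Xs D" "Es D' = Es D" "Fs D' = Fs D" "\<forall>e\<in>Es D \<union> Fs D. elab D' e = elab D e"
    "\<And>e. e \<in> Es D \<Longrightarrow> ehead D' e = ehead D e \<and> etail D' e = etail D e \<and> elab D' e = elab D e"
    using same by (simp_all add: same_data_def)
  note R = reattach_id[OF wf *(1,2) *(5)]
  show "wf_pd D'"
    by (rule wf_reattach[OF wf *(1,2) _ _ permutes_id permutes_id]) (use wf * in \<open>simp_all add: wf_pd_def\<close>)
  show "crossing_sums D' = crossing_sums D" using R by simp
  show "diagram_exponent_sum P N D' = diagram_exponent_sum P N D"
    using R *(2,3,4) exponent_sum_cong_labels[OF esucc_permutes[OF wf]] by (simp add: diagram_exponent_sum_def)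
qed

section \<open>Elementary moves\<close>

definition swap_heads :: "nat \<Rightarrow> nat \<Rightarrow> diagram \<Rightarrow> diagram" where
  "swap_heads e1 e2 D = D\<lparr>ehead := ehead D \<circ> transpose e1 e2\<rparr>"

definition swap_tails :: "nat \<Rightarrow> nat \<Rightarrow> diagram \<Rightarrow> diagram" where
  "swap_tails e1 e2 D = D\<lparr>etail := etail D \<circ> transpose e1 e2\<rparr>"

definition remove_free_loop :: "nat \<Rightarrow> diagram \<Rightarrow> diagram" where
  "remove_free_loop f D = D\<lparr>Fs := Fs D - {f}\<rparr>"

lemma swap_heads_invariants:
  assumes wf: "wf_pd D" and col: "colored D" and P: "cyclic_class P N"
    and e: "e1 \<in> Es D" "e2 \<in> Es D" and lab: "elab D e1 = elab D e2"
  shows "wf_pd (swap_heads e1 e2 D)"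
    "diagram_exponent_sum P N (swap_heads e1 e2 D) = diagram_exponent_sum P N D"
    "crossing_sums (swap_heads e1 e2 D) = crossing_sums D"
proof -
  let ?T = "transpose e1 e2"
  have T: "?T permutes Es D" using e by (rule permutes_swap_id)
  have labT: "elab D (?T e) = elab D e" for e using lab by (simp add: transpose_def)
  note R = reattach[OF wf _ _ T transpose_involutory permutes_id, where D' = "swap_heads e1 e2 D"]
  show "wf_pd (swap_heads e1 e2 D)"
    by (rule wf_reattach[OF wf _ _ _ _ T permutes_id]) (use wf in \<open>simp_all add: swap_heads_def wf_pd_def\<close>)
  show "crossing_sums (swap_heads e1 e2 D) = crossing_sums D" using R labT by (simp add: swap_heads_def)
  show "diagram_exponent_sum P N (swap_heads e1 e2 D) = diagram_exponent_sum P N D"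
    using R labT exponent_sum_swap_heads[OF conj_system_diagram[OF wf col] P _ _ lab] e
    by (simp add: swap_heads_def diagram_exponent_sum_def)
qed

lemma swap_tails_invariants:
  assumes wf: "wf_pd D" and col: "colored D" and P: "cyclic_class P N"
    and e: "e1 \<in> Es D" "e2 \<in> Es D" and lab: "elab D e1 = elab D e2"
  shows "wf_pd (swap_tails e1 e2 D)"
    "diagram_exponent_sum P N (swap_tails e1 e2 D) = diagram_exponent_sum P N D"
    "crossing_sums (swap_tails e1 e2 D) = crossing_sums D"
proof -
  let ?T = "transpose e1 e2"
  have T: "?T permutes Es D" using e by (rule permutes_swap_id)
  have labT: "elab D (?T e) = elab D e" for e using lab by (simp add: transpose_def)
  note R = reattach[OF wf _ _ permutes_id _ T transpose_involutory, where D' = "swap_tails e1 e2 D"]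
  show "wf_pd (swap_tails e1 e2 D)"
    by (rule wf_reattach[OF wf _ _ _ _ permutes_id T]) (use wf in \<open>simp_all add: swap_tails_def wf_pd_def\<close>)
  show "crossing_sums (swap_tails e1 e2 D) = crossing_sums D" using R labT by (simp add: swap_tails_def)
  show "diagram_exponent_sum P N (swap_tails e1 e2 D) = diagram_exponent_sum P N D"
    using R labT exponent_sum_swap_tails[OF conj_system_diagram[OF wf col] P _ _ lab] e
    by (simp add: swap_tails_def diagram_exponent_sum_def)
qed

lemma fresh_notin: assumes "finite (Es D \<union> Fs D)" shows "fresh D \<notin> Es D \<union> Fs D"
proof
  assume "fresh D \<in> Es D \<union> Fs D"
  then have "fresh D \<le> Max (insert 0 (Es D \<union> Fs D))" using assms by (intro Max_ge) auto
  then show False by (simp add: fresh_def)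
qed

lemma add_free_loop_invariants:
  assumes wf: "wf_pd D" and col: "colored D" and P: "cyclic_class P N" and x: "x \<in> Tstar"
  shows "wf_pd (add_free_loop x D)"
    "diagram_exponent_sum P N (add_free_loop x D) = diagram_exponent_sum P N D"
    "crossing_sums (add_free_loop x D) = crossing_sums D"
proof -
  let ?A = "Es D \<union> Fs D" and ?D' = "add_free_loop x D"
  have fr: "fresh D \<notin> ?A" using fresh_notin[of D] wf by (simp add: wf_pd_def)
  have R: "esucc ?D' = esucc D" "ufactor ?D' = ufactor D" "crossing_sums ?D' = crossing_sums D"
    by (rule reattach_id[OF wf]; use fr in \<open>auto simp: add_free_loop_def\<close>)+
  show "wf_pd ?D'"
    by (rule wf_reattach[OF wf _ _ _ _ permutes_id permutes_id])
      (use wf fr in \<open>simp_all add: add_free_loop_def wf_pd_def\<close>)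
  show "crossing_sums ?D' = crossing_sums D" by (fact R(3))
  have sys: "conj_system (insert (fresh D) ?A) (esucc D) (ufactor D) (elab ?D')"
    using conj_system_insert_fixed[OF conj_system_diagram[OF wf col] fr _ _ x] fr
    by (simp add: add_free_loop_def esucc_def ufactor_eq)
  have "exponent_sum P N ?A (esucc D) (ufactor D) (elab ?D') = exponent_sum P N ?A (esucc D) (ufactor D) (elab D)"
    using exponent_sum_cong_labels[OF esucc_permutes[OF wf]] fr by (simp add: add_free_loop_def)
  moreover have "exponent_sum P N (insert (fresh D) ?A - {fresh D}) (esucc D) (ufactor D) (elab ?D')
      = exponent_sum P N (insert (fresh D) ?A) (esucc D) (ufactor D) (elab ?D')"
    using fr by (intro exponent_sum_remove_fixed[OF sys P]) (simp_all add: esucc_def ufactor_eq)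
  moreover have "insert (fresh D) ?A - {fresh D} = ?A" using fr by blast
  ultimately show "diagram_exponent_sum P N ?D' = diagram_exponent_sum P N D"
    using R fr by (simp add: diagram_exponent_sum_def add_free_loop_def)
qed

lemma remove_free_loop_invariants:
  assumes wf: "wf_pd D" and col: "colored D" and P: "cyclic_class P N" and f: "f \<in> Fs D"
  shows "wf_pd (remove_free_loop f D)"
    "diagram_exponent_sum P N (remove_free_loop f D) = diagram_exponent_sum P N D"
    "crossing_sums (remove_free_loop f D) = crossing_sums D"
proof -
  let ?A = "Es D \<union> Fs D" and ?D' = "remove_free_loop f D"
  have fE: "f \<notin> Es D" using wf f by (auto simp: wf_pd_def)
  have R: "esucc ?D' = esucc D" "ufactor ?D' = ufactor D" "crossing_sums ?D' = crossing_sums D"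
    by (rule reattach_id[OF wf]; simp add: remove_free_loop_def)+
  show "wf_pd ?D'"
    by (rule wf_reattach[OF wf _ _ _ _ permutes_id permutes_id])
      (use wf in \<open>auto simp: remove_free_loop_def wf_pd_def\<close>)
  show "crossing_sums ?D' = crossing_sums D" by (fact R(3))
  have "Es D \<union> (Fs D - {f}) = ?A - {f}" using fE by blast
  then show "diagram_exponent_sum P N ?D' = diagram_exponent_sum P N D"
    using R exponent_sum_remove_fixed[OF conj_system_diagram[OF wf col] P] f fE
    by (simp add: diagram_exponent_sum_def remove_free_loop_def esucc_def ufactor_eq)
qed

lemma band_move_cases:
  assumes "e1 \<in> Es D \<union> Fs D" "e2 \<in> Es D \<union> Fs D" "Es D \<inter> Fs D = {}"
  obtains (loop) "e1 = e2" "band_move D e1 e2 = add_free_loop (elab D e1) D"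
  | (swap) "e1 \<noteq> e2" "e1 \<in> Es D" "e2 \<in> Es D" "band_move D e1 e2 = swap_heads e1 e2 D"
  | (remove) f where "f \<in> Fs D" "band_move D e1 e2 = remove_free_loop f D"
proof (cases "e1 = e2")
  case True
  then show ?thesis using loop by (simp add: band_move_def)
next
  case False
  show ?thesis
  proof (cases "e1 \<in> Es D \<and> e2 \<in> Es D")
    case True
    have "(ehead D)(e1 := ehead D e2, e2 := ehead D e1) = ehead D \<circ> transpose e1 e2"
      using False by (auto simp: transpose_def)
    then show ?thesis using swap False True by (simp add: band_move_def swap_heads_def)
  next
    case both: False
    show ?thesis
    proof (cases "e1 \<in> Fs D")
      case True
      then show ?thesis using remove False both by (simp add: band_move_def remove_free_loop_def)
    next
      case notF: False
      then have "e2 \<in> Fs D" using assms both by blast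
      then show ?thesis using remove False both notF by (simp add: band_move_def remove_free_loop_def)
    qed
  qed
qed

theorem band_move_invariants:
  assumes wf: "wf_pd D" and col: "colored D" and P: "cyclic_class P N"
    and e: "e1 \<in> Es D \<union> Fs D" "e2 \<in> Es D \<union> Fs D" and lab: "elab D e1 = elab D e2"
  shows "wf_pd (band_move D e1 e2)"
    and "diagram_exponent_sum P N (band_move D e1 e2) = diagram_exponent_sum P N D"
    and "crossing_sums (band_move D e1 e2) = crossing_sums D"
proof -
  have "Es D \<inter> Fs D = {}" using wf by (simp add: wf_pd_def)
  then have "wf_pd (band_move D e1 e2) \<and> diagram_exponent_sum P N (band_move D e1 e2) = diagram_exponent_sum P N D
      \<and> crossing_sums (band_move D e1 e2) = crossing_sums D"
  proof (rule band_move_cases[OF e])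
    assume "band_move D e1 e2 = add_free_loop (elab D e1) D"
    then show ?thesis using add_free_loop_invariants[OF wf col P colored_Tstar[OF col e(1)]] by simp
  next
    assume "e1 \<in> Es D" "e2 \<in> Es D" "band_move D e1 e2 = swap_heads e1 e2 D"
    then show ?thesis using swap_heads_invariants[OF wf col P _ _ lab] by simp
  next
    fix f assume "f \<in> Fs D" "band_move D e1 e2 = remove_free_loop f D"
    then show ?thesis using remove_free_loop_invariants[OF wf col P] by simp
  qed
  then show "wf_pd (band_move D e1 e2)"
    "diagram_exponent_sum P N (band_move D e1 e2) = diagram_exponent_sum P N D"
    "crossing_sums (band_move D e1 e2) = crossing_sums D" by blast+
qed

lemma Qc_band_move:
  assumes "wf_pd D" "colored D" "e1 \<in> Es D \<union> Fs D" "e2 \<in> Es D \<union> Fs D" "elab D e1 = elab D e2"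
  shows "Qc (band_move D e1 e2) = Qc D"
  using band_move_invariants[OF assms(1,2) cyclic_class_Q8loop assms(3-5)] assms(1)
  by (simp add: Qc_eq crossing_sums_def)

section \<open>Reversing orientations\<close>

lemma reverse_edges_simps:
  "Xs (reverse_edges S D) = Xs D" "Es (reverse_edges S D) = Es D" "Fs (reverse_edges S D) = Fs D"
  "ehead (reverse_edges S D) e = (if e \<in> S then etail D e else ehead D e)"
  "etail (reverse_edges S D) e = (if e \<in> S then ehead D e else etail D e)"
  "elab (reverse_edges S D) e = (if e \<in> S then inverse (elab D e) else elab D e)"
  by (simp_all add: reverse_edges_def qinv_eq_inverse)

lemma edge_at_reverse_edges: "edge_at (reverse_edges S D) = edge_at D"
proof -
  have "(e \<in> Es (reverse_edges S D) \<and> (ehead (reverse_edges S D) e = s \<or> etail (reverse_edges S D) e = s))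
     = (e \<in> Es D \<and> (ehead D e = s \<or> etail D e = s))" for e s
    by (auto simp: reverse_edges_simps)
  then show ?thesis unfolding edge_at_def fun_eq_iff by simp
qed

definition esucc_closed :: "nat set \<Rightarrow> diagram \<Rightarrow> bool" where
  "esucc_closed S D \<longleftrightarrow> (\<forall>e\<in>Es D. esucc D e \<in> S \<longleftrightarrow> e \<in> S)"

lemma esucc_closed_opposite:
  assumes wf: "wf_pd D" and cl: "esucc_closed S D" and s: "s \<in> slots D"
  shows "edge_at D (opposite s) \<in> S \<longleftrightarrow> edge_at D s \<in> S"
proof -
  have "edge_at D t \<in> S \<longleftrightarrow> edge_at D (opposite t) \<in> S" if t: "t \<in> slots D" "is_head D t" for t
  proof -
    have "edge_at D t \<in> Es D" "ehead D (edge_at D t) = t" using edge_at_in_Es(1)[OF wf t(1)] is_head_iff[OF wf] t by auto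
    then show ?thesis using cl esucc_eq unfolding esucc_closed_def by metis
  qed
  then show ?thesis
    using is_head_opposite[OF wf s] opposite_in_slots[OF s] opposite_opposite[OF s] s by metis
qed

lemma ends_reverse_edges:
  assumes wf: "wf_pd D" and s: "s \<in> slots D"
  shows "s \<in> ehead (reverse_edges S D) ` Es D \<longleftrightarrow> (is_head D s \<longleftrightarrow> edge_at D s \<notin> S)"
    and "s \<in> etail (reverse_edges S D) ` Es D \<longleftrightarrow> (is_head D s \<longleftrightarrow> edge_at D s \<in> S)"
proof -
  define t where "t = edge_at D s"
  have t: "t \<in> Es D" "ehead D t = s \<or> etail D t = s" using edge_at_in_Es[OF wf s] by (auto simp: t_def)
  have uniq: "e = t" if "e \<in> Es D" "ehead D e = s \<or> etail D e = s" for e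
    using edge_at_eq[OF wf that] by (simp add: t_def)
  have head: "is_head D s \<longleftrightarrow> ehead D t = s" "\<not> is_head D s \<longleftrightarrow> etail D t = s"
    using is_head_iff[OF wf s] not_is_head_iff[OF wf s] by (simp_all add: t_def)
  have end_t: "s \<in> f ` Es D \<longleftrightarrow> f t = s"
    if "\<And>e. f e = ehead D e \<or> f e = etail D e" for f :: "nat \<Rightarrow> nat \<times> nat"
  proof
    assume "s \<in> f ` Es D"
    then obtain e where "e \<in> Es D" "f e = s" by blast
    then show "f t = s" using uniq that by metis
  qed (use t(1) in blast)
  have "s \<in> ehead (reverse_edges S D) ` Es D \<longleftrightarrow> ehead (reverse_edges S D) t = s"
    "s \<in> etail (reverse_edges S D) ` Es D \<longleftrightarrow> etail (reverse_edges S D) t = s"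
    by (rule end_t, simp add: reverse_edges_simps)+
  then show "s \<in> ehead (reverse_edges S D) ` Es D \<longleftrightarrow> (is_head D s \<longleftrightarrow> edge_at D s \<notin> S)"
    and "s \<in> etail (reverse_edges S D) ` Es D \<longleftrightarrow> (is_head D s \<longleftrightarrow> edge_at D s \<in> S)"
    unfolding t_def[symmetric] using head by (auto simp: reverse_edges_simps)
qed

lemma wf_reverse_edges:
  assumes wf: "wf_pd D" and cl: "esucc_closed S D"
  shows "wf_pd (reverse_edges S D)"
proof -
  let ?R = "reverse_edges S D"
  define \<phi> where "\<phi> = (\<lambda>(e::nat, b). (e, if e \<in> S then \<not> b else b))"
  have "bij_betw \<phi> (Es D \<times> UNIV) (Es D \<times> UNIV)"
    by (rule bij_betw_byWitness[where f' = \<phi>]) (auto simp: \<phi>_def)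
  then have "bij_betw (edge_end D \<circ> \<phi>) (Es D \<times> UNIV) (slots D)"
    using wf_edge_end_bij[OF wf] by (rule bij_betw_trans)
  moreover have "edge_end ?R = edge_end D \<circ> \<phi>"
    by (auto simp: fun_eq_iff edge_end_def \<phi>_def reverse_edges_simps)
  moreover have "((c,0) \<in> ehead ?R ` Es D \<longleftrightarrow> (c,2) \<in> etail ?R ` Es D)
      \<and> ((c,1) \<in> ehead ?R ` Es D \<longleftrightarrow> (c,3) \<in> etail ?R ` Es D)" if c: "c \<in> Xs D" for c
  proof -
    have sl: "(c,k) \<in> slots D" if "k < 4" for k using c that by (simp add: slots_def)
    have "opposite (c,0) = (c,2)" "opposite (c,1) = (c,3)" by (simp_all add: opposite_def)
    then have "edge_at D (c,2) \<in> S \<longleftrightarrow> edge_at D (c,0) \<in> S" "edge_at D (c,3) \<in> S \<longleftrightarrow> edge_at D (c,1) \<in> S"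
      using esucc_closed_opposite[OF wf cl sl[of 0]] esucc_closed_opposite[OF wf cl sl[of 1]] by simp_all
    then show ?thesis
      using ends_reverse_edges[OF wf sl] crossing_heads[OF wf c] by simp
  qed
  ultimately show ?thesis using wf by (simp add: wf_pd_def reverse_edges_simps slots_def)
qed

lemma conjugation_reversed:
  fixes g x y :: "'a::division_ring"
  assumes "g \<noteq> 0" "x \<noteq> 0" and e: "\<epsilon> = 1 \<or> \<epsilon> = -1" and y: "y = g powi \<epsilon> * x * g powi (-\<epsilon>)"
  shows "y = (inverse g) powi (-\<epsilon>) * x * (inverse g) powi (- (-\<epsilon>))"
    and "inverse x = g powi (-\<epsilon>) * inverse y * g powi (- (-\<epsilon>))"
    and "inverse x = (inverse g) powi \<epsilon> * inverse y * (inverse g) powi (-\<epsilon>)"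
proof -
  define G where "G = g powi \<epsilon>"
  have G: "G \<noteq> 0" "g powi (-\<epsilon>) = inverse G" using assms(1) by (simp_all add: G_def power_int_minus)
  have y': "y = G * x * inverse G" using y G by (simp add: G_def)
  show "y = (inverse g) powi (-\<epsilon>) * x * (inverse g) powi (- (-\<epsilon>))"
    using y' G by (simp add: power_int_inverse G_def)
  have "inverse y = G * inverse x * inverse G"
    using G assms(2) y' by (simp add: nonzero_inverse_mult_distrib mult.assoc)
  then have "g powi (-\<epsilon>) * inverse y * g powi (- (-\<epsilon>)) = inverse G * (G * inverse x * inverse G) * G"
    using G by (simp add: G_def)
  also have "\<dots> = (inverse G * G) * inverse x * (inverse G * G)" by (simp only: mult.assoc)
  finally show "inverse x = g powi (-\<epsilon>) * inverse y * g powi (- (-\<epsilon>))" using G by simp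
  then show "inverse x = (inverse g) powi \<epsilon> * inverse y * (inverse g) powi (-\<epsilon>)"
    by (simp add: power_int_inverse power_int_minus)
qed

lemma crossing_reverse_edges:
  assumes wf: "wf_pd D" and cl: "esucc_closed S D" and c: "c \<in> Xs D"
  defines "a \<equiv> edge_at D (c,0) \<in> S" and "b \<equiv> edge_at D (c,1) \<in> S"
  shows "csign (reverse_edges S D) c = (if a = b then csign D c else - csign D c)"
    and "in_under (reverse_edges S D) c = (if a then out_under D c else in_under D c)"
    and "out_under (reverse_edges S D) c = (if a then in_under D c else out_under D c)"
    and "in_under D c \<in> S \<longleftrightarrow> a" "out_under D c \<in> S \<longleftrightarrow> a"
    and "overlab (reverse_edges S D) c = (if b then inverse (overlab D c) else overlab D c)"
proof -
  let ?R = "reverse_edges S D"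
  have sl: "(c,k) \<in> slots D" if "k < 4" for k using c that by (simp add: slots_def)
  have "opposite (c,0) = (c,2)" "opposite (c,1) = (c,3)" by (simp_all add: opposite_def)
  then have s02: "edge_at D (c,2) \<in> S \<longleftrightarrow> a"
    using esucc_closed_opposite[OF wf cl sl[of 0]] by (simp add: a_def)
  have "(c,0) \<in> ehead ?R ` Es ?R \<longleftrightarrow> ((c,0) \<in> ehead D ` Es D \<longleftrightarrow> \<not> a)"
    "(c,1) \<in> ehead ?R ` Es ?R \<longleftrightarrow> ((c,1) \<in> ehead D ` Es D \<longleftrightarrow> \<not> b)"
    using ends_reverse_edges(1)[OF wf sl[of 0]] ends_reverse_edges(1)[OF wf sl[of 1]]
    by (simp_all add: a_def b_def is_head_def reverse_edges_simps)
  then have u: "uin ?R c = (if a then (uin D c + 2) mod 4 else uin D c)"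
    and o: "oin ?R c = (if b then (oin D c + 2) mod 4 else oin D c)"
    by (auto simp: uin_def oin_def)
  show "csign ?R c = (if a = b then csign D c else - csign D c)"
    using u o uin_cases[of D c] oin_cases[of D c] by (cases a; cases b) (auto simp: csign_def)
  show "in_under ?R c = (if a then out_under D c else in_under D c)"
    "out_under ?R c = (if a then in_under D c else out_under D c)"
    using u uin_cases[of D c] by (auto simp: in_under_def out_under_def edge_at_reverse_edges numeral_2_eq_2)
  show "in_under D c \<in> S \<longleftrightarrow> a" "out_under D c \<in> S \<longleftrightarrow> a"
    using uin_cases[of D c] s02 by (auto simp: in_under_def out_under_def a_def numeral_2_eq_2)
  show "overlab ?R c = (if b then inverse (overlab D c) else overlab D c)"
    by (simp add: overlab_def edge_at_reverse_edges reverse_edges_simps b_def)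
qed

lemma colored_iff: "colored D \<longleftrightarrow> (\<forall>e \<in> Es D \<union> Fs D. elab D e \<in> Tstar)
     \<and> (\<forall>c\<in>Xs D. elab D (edge_at D (c,1)) = elab D (edge_at D (c,3))
         \<and> elab D (out_under D c)
           = overlab D c powi csign D c * elab D (in_under D c) * overlab D c powi (- csign D c))"
  by (simp add: colored_def qmul_eq_times qzpow_eq_power_int)

lemma colored_reverse_edges:
  assumes wf: "wf_pd D" and col: "colored D" and cl: "esucc_closed S D"
  shows "colored (reverse_edges S D)"
  unfolding colored_iff
proof (intro conjI ballI)
  let ?R = "reverse_edges S D"
  show "elab ?R e \<in> Tstar" if "e \<in> Es ?R \<union> Fs ?R" for e
    using that col Tstar_inverse by (auto simp: colored_def reverse_edges_simps)
  fix c assume "c \<in> Xs ?R"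
  then have c: "c \<in> Xs D" by (simp add: reverse_edges_simps)
  have sl: "(c,k) \<in> slots D" if "k < 4" for k using c that by (simp add: slots_def)
  have "opposite (c,1) = (c,3)" by (simp add: opposite_def)
  then have "edge_at D (c,3) \<in> S \<longleftrightarrow> edge_at D (c,1) \<in> S" using esucc_closed_opposite[OF wf cl sl[of 1]] by simp
  then show "elab ?R (edge_at ?R (c,1)) = elab ?R (edge_at ?R (c,3))"
    using col c by (simp add: colored_iff edge_at_reverse_edges reverse_edges_simps)
  define g x y \<epsilon> where "g = overlab D c" and "x = elab D (in_under D c)"
    and "y = elab D (out_under D c)" and "\<epsilon> = csign D c"
  have "in_under D c \<in> Es D" using edge_at_in_Es(1)[OF wf sl] uin_cases[of D c] by (auto simp: in_under_def)
  then have nz: "g \<noteq> 0" "x \<noteq> 0"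
    using overlab_Tstar[OF wf col c] colored_Tstar[OF col] Tstar_nonzero by (auto simp: g_def x_def)
  have eps: "\<epsilon> = 1 \<or> \<epsilon> = -1" by (simp add: \<epsilon>_def csign_cases)
  have y: "y = g powi \<epsilon> * x * g powi (-\<epsilon>)" using col c by (simp add: colored_iff g_def x_def y_def \<epsilon>_def)
  note W = conjugation_reversed[OF nz eps y] y
  note X = crossing_reverse_edges[OF wf cl c]
  show "elab ?R (out_under ?R c) = overlab ?R c powi csign ?R c * elab ?R (in_under ?R c) * overlab ?R c powi (- csign ?R c)"
    using W X by (cases "edge_at D (c,0) \<in> S"; cases "edge_at D (c,1) \<in> S")
      (simp_all add: reverse_edges_simps g_def x_def y_def \<epsilon>_def)
qed

definition misoriented :: "quat \<Rightarrow> bool" where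
  "misoriented x \<longleftrightarrow> (is_black x \<and> \<not> black_good x) \<or> (is_gray x \<and> \<not> gray_good x)"

definition misoriented_edges :: "diagram \<Rightarrow> nat set" where
  "misoriented_edges D = {e \<in> Es D \<union> Fs D. misoriented (elab D e)}"

lemma orient_bg_eq: "orient_bg D = reverse_edges (misoriented_edges D) D"
  by (simp add: orient_bg_def misoriented_edges_def misoriented_def)

lemma misoriented_conjugate:
  assumes "g \<in> Tstar" "x \<in> Tstar" shows "misoriented (g * x * inverse g) \<longleftrightarrow> misoriented x"
proof -
  have "is_black (g * x * inverse g) \<longleftrightarrow> is_black x" "is_gray (g * x * inverse g) \<longleftrightarrow> is_gray x"
    using assms qre_conjugate[OF Tstar_nonzero[OF assms(1)]] Tstar_conjugate
    by (auto simp: is_black_def is_gray_def)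
  then show ?thesis using good_conjugate_iff[OF assms] by (auto simp: misoriented_def)
qed

lemma orient_bg_wf_colored:
  assumes wf: "wf_pd D" and col: "colored D"
  shows "wf_pd (orient_bg D)" "colored (orient_bg D)"
proof -
  have "esucc_closed (misoriented_edges D) D"
    unfolding esucc_closed_def misoriented_edges_def
    using wirtinger_step[OF wf col] misoriented_conjugate[OF ufactor_Tstar[OF wf col] colored_Tstar[OF col]]
      esucc_in_Es(1)[OF wf] by auto
  then show "wf_pd (orient_bg D)" "colored (orient_bg D)"
    unfolding orient_bg_eq using wf_reverse_edges[OF wf] colored_reverse_edges[OF wf col] by auto
qed

lemma orient_bg_simps:
  "Xs (orient_bg D) = Xs D" "Es (orient_bg D) = Es D" "Fs (orient_bg D) = Fs D" "fresh (orient_bg D) = fresh D"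
  "ehead (orient_bg D) e = (if e \<in> misoriented_edges D then etail D e else ehead D e)"
  "etail (orient_bg D) e = (if e \<in> misoriented_edges D then ehead D e else etail D e)"
  "elab (orient_bg D) e = (if e \<in> misoriented_edges D then inverse (elab D e) else elab D e)"
  by (simp_all add: orient_bg_eq reverse_edges_simps fresh_def)

text \<open>Reorienting commutes with a band move up to the choice of one of the elementary moves:
  a band between two reversed edges swaps their tails instead of their heads.\<close>

lemma orient_bg_add_free_loop:
  fixes x :: quat
  assumes fin: "finite (Es D \<union> Fs D)"
  defines "D' \<equiv> add_free_loop x D"
  shows "same_data (add_free_loop (elab (orient_bg D') (fresh D)) (orient_bg D)) (orient_bg D')"
proof -
  have fr: "fresh D \<notin> Es D \<union> Fs D" using fresh_notin[OF fin] .
  then have "misoriented_edges D' = misoriented_edges D \<union> (if misoriented x then {fresh D} else {})"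
    by (auto simp: misoriented_edges_def D'_def add_free_loop_def)
  then show ?thesis
    using fr unfolding same_data_def by (auto simp: orient_bg_simps D'_def add_free_loop_def)
qed

lemma orient_bg_swap_heads:
  assumes e: "e1 \<in> Es D" "e2 \<in> Es D" and lab: "elab D e1 = elab D e2"
  defines "M \<equiv> misoriented_edges D"
  shows "same_data (if e1 \<in> M then swap_tails e1 e2 (orient_bg D) else swap_heads e1 e2 (orient_bg D))
      (orient_bg (swap_heads e1 e2 D))"
proof -
  let ?T = "transpose e1 e2"
  have M': "misoriented_edges (D\<lparr>ehead := ehead D \<circ> ?T\<rparr>) = M" by (simp add: M_def misoriented_edges_def)
  have M: "e1 \<in> M \<longleftrightarrow> e2 \<in> M" using lab e by (simp add: M_def misoriented_edges_def)
  then have MT: "?T e \<in> M \<longleftrightarrow> e \<in> M" for e by (auto simp: transpose_def)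
  show ?thesis
  proof (cases "e1 \<in> M")
    case True
    then have "?T e = e" if "e \<notin> M" for e using that M by (metis transpose_apply_other)
    then show ?thesis using True unfolding same_data_def
      by (auto simp: orient_bg_simps M' swap_heads_def swap_tails_def MT M_def[symmetric])
  next
    case False
    then have "?T e = e" if "e \<in> M" for e using that M by (metis transpose_apply_other)
    then show ?thesis using False unfolding same_data_def
      by (auto simp: orient_bg_simps M' swap_heads_def MT M_def[symmetric])
  qed
qed

lemma orient_bg_remove_free_loop:
  assumes "f \<notin> Es D"
  shows "same_data (remove_free_loop f (orient_bg D)) (orient_bg (remove_free_loop f D))"
proof -
  have "misoriented_edges (remove_free_loop f D) = misoriented_edges D - {f}"
    using assms by (auto simp: remove_free_loop_def misoriented_edges_def)
  then show ?thesis using assms unfolding same_data_def by (auto simp: orient_bg_simps remove_free_loop_def)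
qed

lemma orient_band_move:
  assumes wf: "wf_pd D" and col: "colored D" and P: "cyclic_class P N"
    and e: "e1 \<in> Es D \<union> Fs D" "e2 \<in> Es D \<union> Fs D" and lab: "elab D e1 = elab D e2"
  obtains E' where "wf_pd E'" "same_data E' (orient_bg (band_move D e1 e2))"
    "diagram_exponent_sum P N E' = diagram_exponent_sum P N (orient_bg D)"
    "crossing_sums E' = crossing_sums (orient_bg D)"
proof -
  let ?E = "orient_bg D"
  have wfE: "wf_pd ?E" and colE: "colored ?E" using orient_bg_wf_colored[OF wf col] by auto
  have dj: "Es D \<inter> Fs D = {}" and fin: "finite (Es D \<union> Fs D)" using wf by (simp_all add: wf_pd_def)
  show ?thesis
  proof (rule band_move_cases[OF e dj])
    assume D': "band_move D e1 e2 = add_free_loop (elab D e1) D"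
    have "elab (orient_bg (add_free_loop (elab D e1) D)) (fresh D) \<in> Tstar"
      using colored_Tstar[OF col e(1)] Tstar_inverse by (simp add: orient_bg_simps add_free_loop_def)
    then show ?thesis
      using that orient_bg_add_free_loop[OF fin] add_free_loop_invariants[OF wfE colE P] unfolding D' by blast
  next
    assume e12: "e1 \<in> Es D" "e2 \<in> Es D" and D': "band_move D e1 e2 = swap_heads e1 e2 D"
    then have e': "e1 \<in> Es ?E" "e2 \<in> Es ?E" by (simp_all add: orient_bg_simps)
    have labE: "elab ?E e1 = elab ?E e2" using lab e by (simp add: orient_bg_simps misoriented_edges_def)
    note same = orient_bg_swap_heads[OF e12 lab, folded D']
    show ?thesis
    proof (cases "e1 \<in> misoriented_edges D")
      case True
      then show ?thesis using that same swap_tails_invariants[OF wfE colE P e' labE] by simp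
    next
      case False
      then show ?thesis using that same swap_heads_invariants[OF wfE colE P e' labE] by simp
    qed
  next
    fix f assume f: "f \<in> Fs D" and D': "band_move D e1 e2 = remove_free_loop f D"
    then have "f \<notin> Es D" "f \<in> Fs ?E" using dj by (auto simp: orient_bg_simps)
    then show ?thesis
      using that orient_bg_remove_free_loop remove_free_loop_invariants[OF wfE colE P] unfolding D' by blast
  qed
qed

lemma Qb_band_move:
  assumes wf: "wf_pd D" and col: "colored D"
    and e: "e1 \<in> Es D \<union> Fs D" "e2 \<in> Es D \<union> Fs D" and lab: "elab D e1 = elab D e2"
  shows "Qb (band_move D e1 e2) = Qb D"
proof -
  obtain E' where E': "wf_pd E'" "same_data E' (orient_bg (band_move D e1 e2))"
    "diagram_exponent_sum is_black 6 E' = diagram_exponent_sum is_black 6 (orient_bg D)"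
    "crossing_sums E' = crossing_sums (orient_bg D)"
    by (rule orient_band_move[OF wf col cyclic_class_black e lab])
  note same = same_data_invariants[OF E'(1,2)]
  show ?thesis
    using same E'(3,4) orient_bg_wf_colored(1)[OF wf col]
    by (simp add: Qb_def Qb_oriented_eq crossing_sums_def)
qed

section \<open>The involution \<open>\<rho>\<close>\<close>

lemma rho_simps:
  "Xs (rho D) = Xs D" "Es (rho D) = Es D" "Fs (rho D) = Fs D"
  "ehead (rho D) = ehead D" "etail (rho D) = etail D"
  "elab (rho D) e = (if elab D e \<in> Q8 then elab D e else - elab D e)"
  by (simp_all add: rho_def qneg_eq_uminus)

lemma rho_same:
  "edge_at (rho D) = edge_at D" "csign (rho D) = csign D" "in_under (rho D) = in_under D"
  "out_under (rho D) = out_under D" "slots (rho D) = slots D" "edge_end (rho D) = edge_end D"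
  by (simp_all add: fun_eq_iff edge_at_def rho_simps uin_def oin_def csign_def in_under_def
      out_under_def slots_def edge_end_def)

lemma wf_rho: "wf_pd (rho D) = wf_pd D"
  unfolding wf_pd_def by (simp add: rho_simps rho_same)

lemma Q8_conjugate:
  assumes "g \<in> Tstar" "x \<in> Tstar" shows "g * x * inverse g \<in> Q8 \<longleftrightarrow> x \<in> Q8"
proof -
  have "y \<in> Q8 \<Longrightarrow> qre y \<noteq> 1/2 \<and> qre y \<noteq> -1/2" for y unfolding Q8_def by auto
  moreover have "y \<in> Tstar \<Longrightarrow> y \<notin> Q8 \<Longrightarrow> qre y = 1/2 \<or> qre y = -1/2" for y unfolding Tstar_def by auto
  ultimately show ?thesis
    using qre_conjugate[OF Tstar_nonzero[OF assms(1)]] Tstar_conjugate[OF assms] assms(2) by metis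
qed

lemma colored_rho:
  assumes wf: "wf_pd D" and col: "colored D" shows "colored (rho D)"
  unfolding colored_iff
proof (intro conjI ballI)
  define f where "f = (\<lambda>x::quat. if x \<in> Q8 then x else - x)"
  have el: "elab (rho D) e = f (elab D e)" for e by (simp add: rho_simps f_def)
  show "elab (rho D) e \<in> Tstar" if "e \<in> Es (rho D) \<union> Fs (rho D)" for e
    using that colored_Tstar[OF col] Tstar_uminus by (simp add: el f_def rho_simps)
  fix c assume "c \<in> Xs (rho D)"
  then have c: "c \<in> Xs D" by (simp add: rho_simps)
  show "elab (rho D) (edge_at (rho D) (c,1)) = elab (rho D) (edge_at (rho D) (c,3))"
    using col c by (simp add: colored_iff el rho_same)
  define g x \<epsilon> where "g = overlab D c" and "x = elab D (in_under D c)" and "\<epsilon> = csign D c"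
  define G where "G = g powi \<epsilon>"
  have "in_under D c \<in> Es D"
    using edge_at_in_Es(1)[OF wf] uin_cases[of D c] c by (auto simp: in_under_def slots_def)
  then have xT: "x \<in> Tstar" using colored_Tstar[OF col] by (simp add: x_def)
  have eps: "\<epsilon> = 1 \<or> \<epsilon> = -1" by (simp add: \<epsilon>_def csign_cases)
  have GT: "G \<in> Tstar" using overlab_Tstar[OF wf col c] eps Tstar_inverse by (auto simp: G_def g_def)
  have ginv: "g powi (-\<epsilon>) = inverse G" by (simp add: G_def power_int_minus)
  have y: "elab D (out_under D c) = G * x * inverse G"
    using col c ginv by (simp add: colored_iff G_def g_def x_def \<epsilon>_def)
  have "f g powi \<epsilon> * X * f g powi (-\<epsilon>) = G * X * inverse G" for X
    using eps ginv by (auto simp: f_def G_def inverse_minus_eq)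
  moreover have "f (G * x * inverse G) = G * f x * inverse G"
    using Q8_conjugate[OF GT xT] by (simp add: f_def)
  ultimately show "elab (rho D) (out_under (rho D) c)
      = overlab (rho D) c powi csign (rho D) c * elab (rho D) (in_under (rho D) c) * overlab (rho D) c powi (- csign (rho D) c)"
    using y by (simp add: el rho_same overlab_def g_def x_def \<epsilon>_def)
qed

lemma rho_band_move: "rho (band_move D e1 e2) = band_move (rho D) e1 e2"
  by (simp add: band_move_def rho_def add_free_loop_def fresh_def fun_eq_iff)

theorem mainTheorem7:
  assumes "Tstar_diagram D"
    and "allowed_reconnection D e1 e2 s"
  shows "Qb (band_move D e1 e2) = Qb D
       \<and> Qg (band_move D e1 e2) = Qg D
       \<and> Qc (band_move D e1 e2) = Qc D"
proof -
  have wf: "wf_pd D" and col: "colored D" using assms(1) by (auto simp: Tstar_diagram_def)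
  have e: "e1 \<in> Es D \<union> Fs D" "e2 \<in> Es D \<union> Fs D" and lab: "elab D e1 = elab D e2"
    using assms(2) by (auto simp: allowed_reconnection_def)
  have "Qb (band_move (rho D) e1 e2) = Qb (rho D)"
    using Qb_band_move[of "rho D"] wf col e lab by (simp add: wf_rho colored_rho rho_simps)
  then show ?thesis
    using Qb_band_move[OF wf col e lab] Qc_band_move[OF wf col e lab] by (simp add: Qg_def rho_band_move)
qed

end
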